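(* Let $p$ be a prime, $n\geq 1$, $\zeta=\zeta_{p^n}$ a primitive $p^n$th root of unity, $T=\mathbb{Z}_{(p)}[\zeta]$ and $t=1-\zeta$. Consider the cyclotomic Dedekind embedding \[ \delta_{p^n}\colon T\otimes_{\mathbb{Z}_{(p)}}T\longrightarrow \prod_{i\in(\mathbb{Z}/p^n)^\ast}T,\qquad \zeta^k\otimes\zeta^l\longmapsto(\zeta^{k+il})_{i\in(\mathbb{Z}/p^n)^\ast}\quad (k,l\in[0,(p-1)p^{n-1}-1]), \] a $T$-linear injective map between free $T$-modules of rank $(p-1)p^{n-1}$ (with $T$ acting on the left tensor factor and componentwise on the product). Let $j\in[0,p^n-1]$ with $p\nmid j$, let $N(j):=\#\{i\in[0,j]: p\nmid i\}$, and write $j=\sum_{s\geq 0}a_sp^s$ with $a_s\in[0,p-1]$. Then the $N(j)$th $T$-linear elementary divisor of $\delta_{p^n}$ has $t$-adic valuation \[ -1+\sum_{s\geq 0}\bigl(a_s(s+1)-a_{s+1}(s+2)\bigr)p^s . \]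
   Context: For an injective $T$-linear map $f\colon M\to N$ between free modules of the same finite rank $r$ over a discrete valuation ring $T$ with uniformizer $t$, there are $T$-bases of $M$ and $N$ in which $f$ is diagonal with entries $t^{e_0},\dots,t^{e_{r-1}}$ (times units), $e_0\le e_1\le\dots\le e_{r-1}$; the $k$th elementary divisor is $t^{e_{k-1}}$, whose valuation is $e_{k-1}$. $\mathbb{Z}_{(p)}$ denotes the localization of $\mathbb{Z}$ at the prime ideal $(p)$. *)

theory Defs
  imports Complex_Main "HOL-Computational_Algebra.Primes" "Jordan_Normal_Form.Matrix"
begin

definition Zloc :: "nat \<Rightarrow> complex set" where
  "Zloc p = {of_int a / of_int b | a b. \<not> int p dvd b}"

text \<open>T = Z_(p)[z] for z a primitive p^n-th root of unity (so powers z^k, k < p^n, suffice).\<close>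
definition cyc_ring :: "nat \<Rightarrow> nat \<Rightarrow> complex \<Rightarrow> complex set" where
  "cyc_ring p n z = {\<Sum>k<p^n. c k * z ^ k | c. \<forall>k. c k \<in> Zloc p}"

definition mat_over :: "complex set \<Rightarrow> complex mat \<Rightarrow> bool" where
  "mat_over S A \<longleftrightarrow> (\<forall>i<dim_row A. \<forall>j<dim_col A. A $$ (i, j) \<in> S)"

definition invertible_over :: "complex set \<Rightarrow> nat \<Rightarrow> complex mat \<Rightarrow> bool" where
  "invertible_over S r U \<longleftrightarrow> U \<in> carrier_mat r r \<and> mat_over S U \<and>
     (\<exists>U'. U' \<in> carrier_mat r r \<and> mat_over S U' \<and> U * U' = 1\<^sub>m r \<and> U' * U = 1\<^sub>m r)"

definition unit_in :: "complex set \<Rightarrow> complex \<Rightarrow> bool" where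
  "unit_in S u \<longleftrightarrow> u \<in> S \<and> u \<noteq> 0 \<and> 1 / u \<in> S"

text \<open>e_0 \<le> ... \<le> e_{r-1} are the exponents of the elementary divisors of the r x r matrix A
  over the DVR S with uniformizer t: after changes of S-bases on source (V) and
  target (U), A becomes diagonal with entries (unit) * t^(e a).\<close>
definition elem_div_exps :: "complex set \<Rightarrow> complex \<Rightarrow> nat \<Rightarrow> complex mat \<Rightarrow> (nat \<Rightarrow> nat) \<Rightarrow> bool" where
  "elem_div_exps S t r A e \<longleftrightarrow>
     (\<forall>a b. a \<le> b \<longrightarrow> b < r \<longrightarrow> e a \<le> e b) \<and>
     (\<exists>U V u. invertible_over S r U \<and> invertible_over S r V \<and> (\<forall>a<r. unit_in S (u a)) \<and>
        U * A * V = mat r r (\<lambda>(a, b). if a = b then u a * t ^ e a else 0))"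

definition cyc_units :: "nat \<Rightarrow> nat \<Rightarrow> nat list" where
  "cyc_units p n = filter (\<lambda>i. \<not> p dvd i) [0..<p^n]"

text \<open>Matrix of the Dedekind embedding w.r.t. the T-basis 1 \<otimes> z^l (l < (p-1)p^(n-1)) of
  T \<otimes> T (T acting on the left factor) and the standard basis of the product indexed by
  (Z/p^n)^*: column l is the image (z^(i*l))_i of 1 \<otimes> z^l.\<close>
definition dedekind_mat :: "nat \<Rightarrow> nat \<Rightarrow> complex \<Rightarrow> complex mat" where
  "dedekind_mat p n z = mat ((p - 1) * p ^ (n - 1)) ((p - 1) * p ^ (n - 1))
     (\<lambda>(a, l). z ^ (cyc_units p n ! a * l))"

definition Ncount :: "nat \<Rightarrow> nat \<Rightarrow> nat" where
  "Ncount p j = card {i. i \<le> j \<and> \<not> p dvd i}"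

definition digit :: "nat \<Rightarrow> nat \<Rightarrow> nat \<Rightarrow> nat" where
  "digit p j s = (j div p ^ s) mod p"

end

(* Let u_0 < ... < u_(r-1) be the residues in [0, p^n) prime to p, and let
   N_c(X) = \<Prod>(X - z^k) over the k < u_c prime to p be the Newton polynomials on these nodes.
   Multiplying the Dedekind matrix (z^(u_a l)) on the right by the unitriangular coefficient matrix
   of the N_c gives the lower triangular matrix (N_c(z^(u_a))). Since 1 - z^m is t^(p^v_p(m)) times
   a unit, N_c(z^(u_a)) is t^(newton_exp p u_c u_a) times a unit, and in each column this exponent
   is smallest on the diagonal. Hence that matrix is a unitriangular matrix over T times a diagonal
   one, and the exponents of the elementary divisors are the diagonal exponents newton_exp p u_c u_c.
   They are unique because \<Sum>_a min(e_a, m) is the largest k such that t^k divides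
   det (A X + t^m Y) for all X, Y over T; here t is not a unit, as p is t^r times a unit and 1/p is
   not in T. Finally, counting the k < j with p^s dividing j - k evaluates newton_exp p j j to the
   digit formula. *)

theory Submission
  imports Defs "Jordan_Normal_Form.Determinant"
    "HOL-Computational_Algebra.Fundamental_Theorem_Algebra" "HOL-Number_Theory.Cong"
    "HOL-Number_Theory.Totient"
begin

section \<open>Counting residues prime to p\<close>

definition units_below :: "nat \<Rightarrow> nat \<Rightarrow> nat set" where
  "units_below p x = {k. k < x \<and> \<not> p dvd k}"

text \<open>The t-adic valuation of \<Prod>k\<in>units_below p x. z^y - z^k for z a primitive p^n-th root of
  unity and t = 1 - z, see prod_zpow_diff_eq_t_power.\<close>
definition newton_exp :: "nat \<Rightarrow> nat \<Rightarrow> nat \<Rightarrow> nat" where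
  "newton_exp p x y = (\<Sum>k\<in>units_below p x. p ^ multiplicity p (y - k))"

lemma finite_units_below [simp]: "finite (units_below p x)"
  unfolding units_below_def by simp

lemma newton_exp_mono_left: "x \<le> x' \<Longrightarrow> newton_exp p x y \<le> newton_exp p x' y"
  unfolding newton_exp_def by (rule sum_mono2) (auto simp: units_below_def)

lemma power_eq_one_plus_sum_diffs:
  fixes p :: nat
  assumes "p \<ge> 1"
  shows "p ^ v = 1 + (\<Sum>s\<in>{1..v}. p ^ s - p ^ (s - 1))"
proof (induction v)
  case (Suc v)
  have "p ^ v \<le> p ^ Suc v" using assms by simp
  then show ?case using Suc by simp
qed simp

lemma power_multiplicity_eq_sum:
  fixes p d :: nat
  assumes p: "p > 1" and d: "0 < d" "d < p ^ n"
  shows "p ^ multiplicity p d = 1 + (\<Sum>s\<in>{1..<n}. if p ^ s dvd d then p ^ s - p ^ (s - 1) else 0)"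
proof -
  define v where "v = multiplicity p d"
  have dvd_iff: "p ^ s dvd d \<longleftrightarrow> s \<le> v" for s
    unfolding v_def using d p by (intro power_dvd_iff_le_multiplicity) auto
  have "p ^ v \<le> d" using dvd_iff[of v] d by (simp add: dvd_imp_le)
  then have "v < n" using d p by (meson le_less_trans power_less_imp_less_exp)
  then have "{s\<in>{1..<n}. s \<le> v} = {1..v}" by auto
  then have "(\<Sum>s\<in>{1..<n}. if p ^ s dvd d then p ^ s - p ^ (s - 1) else 0)
      = (\<Sum>s\<in>{1..v}. p ^ s - p ^ (s - 1))"
    by (simp add: dvd_iff flip: sum.inter_filter)
  then show ?thesis using power_eq_one_plus_sum_diffs[of p v] p unfolding v_def by simp
qed

lemma newton_exp_eq_sum:
  assumes p: "p > 1" and xy: "x \<le> y" and y: "y < p ^ n"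
  shows "newton_exp p x y = card (units_below p x)
    + (\<Sum>s\<in>{1..<n}. (p ^ s - p ^ (s - 1)) * card {k\<in>units_below p x. p ^ s dvd (y - k)})"
proof -
  have "newton_exp p x y = (\<Sum>k\<in>units_below p x.
      1 + (\<Sum>s\<in>{1..<n}. if p ^ s dvd (y - k) then p ^ s - p ^ (s - 1) else 0))"
    unfolding newton_exp_def
  proof (rule sum.cong[OF refl])
    fix k assume "k \<in> units_below p x"
    then have "0 < y - k" "y - k < p ^ n" using xy y unfolding units_below_def by auto
    then show "p ^ multiplicity p (y - k)
        = 1 + (\<Sum>s\<in>{1..<n}. if p ^ s dvd (y - k) then p ^ s - p ^ (s - 1) else 0)"
      by (rule power_multiplicity_eq_sum[OF p])
  qed
  also have "\<dots> = card (units_below p x) + (\<Sum>s\<in>{1..<n}.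
      \<Sum>k\<in>units_below p x. if p ^ s dvd (y - k) then p ^ s - p ^ (s - 1) else 0)"
    unfolding sum.distrib by (simp add: sum.swap[of _ "units_below p x"])
  also have "\<dots> = card (units_below p x)
      + (\<Sum>s\<in>{1..<n}. (p ^ s - p ^ (s - 1)) * card {k\<in>units_below p x. p ^ s dvd (y - k)})"
    by (simp add: mult.commute flip: sum.inter_filter)
  finally show ?thesis .
qed

lemma card_dvd_diff_below_ge:
  fixes M x y :: nat
  assumes M: "M > 0" and xy: "x \<le> y"
  shows "x div M \<le> card {k. k < x \<and> M dvd (y - k)}"
proof -
  let ?f = "\<lambda>i. y mod M + i * M"
  have inj: "inj_on ?f {..<x div M}" by (rule inj_onI) (use M in simp)
  have "?f ` {..<x div M} \<subseteq> {k. k < x \<and> M dvd (y - k)}"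
  proof
    fix k assume "k \<in> ?f ` {..<x div M}"
    then obtain i where i: "i < x div M" "k = ?f i" by auto
    have "k < (i + 1) * M" using i M by simp
    also have "\<dots> \<le> x div M * M" using i by (intro mult_le_mono1) simp
    also have "\<dots> \<le> x" by simp
    finally have "k < x" .
    moreover have "i \<le> y div M" using i div_le_mono[OF xy, of M] by simp
    then have "y - k = y div M * M - i * M"
      using i div_mult_mod_eq[of y M] by linarith
    then have "y - k = (y div M - i) * M" by (simp add: diff_mult_distrib)
    ultimately show "k \<in> {k. k < x \<and> M dvd (y - k)}" by simp
  qed
  then have "card (?f ` {..<x div M}) \<le> card {k. k < x \<and> M dvd (y - k)}"
    by (intro card_mono) simp_all
  then show ?thesis using card_image[OF inj] by simp
qed

lemma card_dvd_diff_below_le: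
  fixes M x :: nat
  assumes M: "M > 0"
  shows "card {k. k < x \<and> M dvd (x - k)} \<le> x div M"
proof -
  have "{k. k < x \<and> M dvd (x - k)} \<subseteq> (\<lambda>j. x - j * M) ` {1..x div M}"
  proof
    fix k assume k: "k \<in> {k. k < x \<and> M dvd (x - k)}"
    then obtain j where j: "x - k = M * j" by auto
    then have "j \<ge> 1" "j * M \<le> x" "k = x - j * M" using k by (cases j; simp add: mult.commute)+
    then show "k \<in> (\<lambda>j. x - j * M) ` {1..x div M}"
      using M by (auto simp: less_eq_div_iff_mult_less_eq)
  qed
  then have "card {k. k < x \<and> M dvd (x - k)} \<le> card ((\<lambda>j. x - j * M) ` {1..x div M})"
    by (intro card_mono) simp_all
  also have "\<dots> \<le> x div M" using card_image_le[of "{1..x div M}"] by simp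
  finally show ?thesis .
qed

lemma units_below_dvd_diff_eq:
  assumes s: "s \<ge> 1" and xy: "x \<le> y" and py: "\<not> p dvd y"
  shows "{k\<in>units_below p x. p ^ s dvd (y - k)} = {k. k < x \<and> p ^ s dvd (y - k)}"
proof -
  have "\<not> p dvd k" if "k < x" "p ^ s dvd (y - k)" for k
  proof
    assume "p dvd k"
    moreover have "p dvd (y - k)" using s dvd_trans[OF dvd_power that(2)] by simp
    ultimately have "p dvd (y - k) + k" by simp
    then show False using that xy py by simp
  qed
  then show ?thesis unfolding units_below_def by auto
qed

lemma card_units_below_dvd_diff_self:
  assumes p: "p > 1" and s: "s \<ge> 1" and px: "\<not> p dvd x"
  shows "card {k\<in>units_below p x. p ^ s dvd (x - k)} = x div p ^ s"
  using card_dvd_diff_below_le[of "p ^ s" x] card_dvd_diff_below_ge[of "p ^ s" x x] p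
  unfolding units_below_dvd_diff_eq[OF s le_refl px] by simp

lemma newton_exp_self_le:
  assumes p: "p > 1" and xy: "x \<le> y" and y: "y < p ^ n"
    and px: "\<not> p dvd x" and py: "\<not> p dvd y"
  shows "newton_exp p x x \<le> newton_exp p x y"
proof -
  have "card {k\<in>units_below p x. p ^ s dvd (x - k)} \<le> card {k\<in>units_below p x. p ^ s dvd (y - k)}"
    if "s \<ge> 1" for s
    using card_units_below_dvd_diff_self[OF p that px] card_dvd_diff_below_ge[OF _ xy, of "p ^ s"] p
    unfolding units_below_dvd_diff_eq[OF that xy py] by simp
  then show ?thesis
    unfolding newton_exp_eq_sum[OF p le_refl order.strict_trans1[OF xy y]] newton_exp_eq_sum[OF p xy y]
    by (intro add_left_mono sum_mono mult_left_mono) auto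
qed

lemma card_units_below:
  assumes p: "p > 1" and pj: "\<not> p dvd j"
  shows "card (units_below p j) = j - j div p - 1"
proof -
  define M where "M = {k. k < j \<and> p dvd k}"
  have "M = (\<lambda>i. p * i) ` {..j div p}"
  proof (intro equalityI subsetI)
    fix k assume "k \<in> M"
    then obtain i where i: "k = p * i" "k < j" unfolding M_def by auto
    then have "i * p \<le> j" by (simp add: mult.commute)
    then have "i \<le> j div p" using p by (simp add: less_eq_div_iff_mult_less_eq)
    then show "k \<in> (\<lambda>i. p * i) ` {..j div p}" using i by auto
  next
    fix k assume "k \<in> (\<lambda>i. p * i) ` {..j div p}"
    then obtain i where i: "k = p * i" "i \<le> j div p" by auto
    then have "i * p \<le> j" using p by (simp add: less_eq_div_iff_mult_less_eq)
    then have "k \<le> j" using i by (simp add: mult.commute)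
    moreover have "k \<noteq> j" using i pj by auto
    ultimately show "k \<in> M" unfolding M_def using i by auto
  qed
  moreover have "inj_on (\<lambda>i. p * i) {..j div p}" using p by (intro inj_onI) simp
  ultimately have card_M: "card M = j div p + 1" by (simp add: card_image)
  have "{..<j} = units_below p j \<union> M" "units_below p j \<inter> M = {}"
    unfolding units_below_def M_def by auto
  then have "j = card (units_below p j) + card M"
    using card_Un_disjoint[of "units_below p j" M] card_lessThan[of j] by (simp add: M_def)
  then show ?thesis using card_M by simp
qed

lemma card_units_below_prime_power:
  assumes p: "prime p" and n: "n \<ge> 1"
  shows "card (units_below p (p ^ n)) = (p - 1) * p ^ (n - 1)"
proof -
  have coprime_iff: "coprime k (p ^ n) \<longleftrightarrow> \<not> p dvd k" for k
  proof
    assume "coprime k (p ^ n)"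
    then have "coprime k p" using n by simp
    then show "\<not> p dvd k" using p by (meson coprime_common_divisor dvd_refl not_prime_unit)
  qed (rule prime_imp_power_coprime[OF p])
  have "p dvd p ^ n" using n by (simp add: dvd_power)
  then have "units_below p (p ^ n) = totatives (p ^ n)"
    unfolding units_below_def totatives_def coprime_iff by (auto simp: le_less intro: Nat.gr0I)
  then show ?thesis using totient_prime_power[OF p] n by (simp add: totient_def)
qed

lemma digit_eq_div_diff:
  assumes "p > 0"
  shows "int (digit p j s) = int (j div p ^ s) - int p * int (j div p ^ (s + 1))"
proof -
  have "j div p ^ (s + 1) = j div p ^ s div p"
    unfolding Suc_eq_plus1[symmetric] power_Suc2 by (rule div_mult2_eq)
  then have "j div p ^ s = p * (j div p ^ (s + 1)) + digit p j s"
    unfolding digit_def by simp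
  then show ?thesis by simp
qed

lemma sum_shift_diff:
  fixes F :: "nat \<Rightarrow> int" and P :: int
  shows "(\<Sum>s\<le>N. F s * P ^ s) - (\<Sum>s\<le>N. F (s + 1) * P ^ s)
    = F 0 + (\<Sum>s\<in>{1..N}. F s * (P ^ s - P ^ (s - 1))) - F (N + 1) * P ^ N"
  by (induction N) (simp_all add: algebra_simps)

lemma weighted_digit_sum_telescope:
  fixes F :: "nat \<Rightarrow> int" and P :: int
  shows "(\<Sum>s\<le>N. ((F s - P * F (s + 1)) * int (s + 1) - (F (s + 1) - P * F (s + 2)) * int (s + 2)) * P ^ s)
    = (\<Sum>s\<le>N. F s * P ^ s) - int (N + 1) * F (N + 1) * P ^ (N + 1)
      - (F 1 + (\<Sum>s\<le>N. F (s + 1) * P ^ s) - int (N + 2) * F (N + 2) * P ^ (N + 1))"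
  by (induction N) (simp_all add: algebra_simps)

lemma digit_formula_eq_sum_div:
  assumes p: "p > 0" and n: "n \<ge> 1" and j: "j < p ^ n"
  shows "(\<Sum>s\<le>n. (int (digit p j s) * int (s + 1) - int (digit p j (s + 1)) * int (s + 2)) * int p ^ s)
    = int j - int (j div p) + (\<Sum>s\<in>{1..<n}. int (j div p ^ s) * (int p ^ s - int p ^ (s - 1)))"
proof -
  define F where "F = (\<lambda>s. int (j div p ^ s))"
  define P where "P = int p"
  have F_vanish: "F s = 0" if "s \<ge> n" for s
    using j order.strict_trans2[OF j power_increasing[OF that]] p unfolding F_def by simp
  have "(\<Sum>s\<le>n. (int (digit p j s) * int (s + 1) - int (digit p j (s + 1)) * int (s + 2)) * int p ^ s)
     = (\<Sum>s\<le>n. ((F s - P * F (s + 1)) * int (s + 1) - (F (s + 1) - P * F (s + 2)) * int (s + 2)) * P ^ s)"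
    unfolding F_def P_def using digit_eq_div_diff[OF p] by (simp add: add.assoc)
  also have "\<dots> = (\<Sum>s\<le>n. F s * P ^ s) - (\<Sum>s\<le>n. F (s + 1) * P ^ s) - F 1"
    unfolding weighted_digit_sum_telescope using F_vanish[of "n + 1"] F_vanish[of "n + 2"] by simp
  also have "\<dots> = F 0 + (\<Sum>s\<in>{1..n}. F s * (P ^ s - P ^ (s - 1))) - F 1"
    unfolding sum_shift_diff using F_vanish[of "n + 1"] by simp
  also have "(\<Sum>s\<in>{1..n}. F s * (P ^ s - P ^ (s - 1))) = (\<Sum>s\<in>{1..<n}. F s * (P ^ s - P ^ (s - 1)))"
  proof -
    have "{1..n} = insert n {1..<n}" using n by auto
    then show ?thesis using F_vanish[of n] by simp
  qed
  finally show ?thesis unfolding F_def P_def by simp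
qed

lemma newton_exp_self_eq_sum_div:
  assumes p: "p > 1" and j: "j < p ^ n" and pj: "\<not> p dvd j"
  shows "int (newton_exp p j j)
    = int j - int (j div p) - 1 + (\<Sum>s\<in>{1..<n}. int (j div p ^ s) * (int p ^ s - int p ^ (s - 1)))"
proof -
  have "newton_exp p j j = card (units_below p j) + (\<Sum>s\<in>{1..<n}. (p ^ s - p ^ (s - 1)) * (j div p ^ s))"
    unfolding newton_exp_eq_sum[OF p le_refl j] using card_units_below_dvd_diff_self[OF p _ pj]
    by (intro arg_cong2[where f = "(+)"] sum.cong) auto
  moreover have "j div p < j" using p pj by (cases j) auto
  moreover have "int (p ^ s - p ^ (s - 1)) = int p ^ s - int p ^ (s - 1)" if "s \<ge> 1" for s
    using p that by (simp add: of_nat_diff power_increasing)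
  ultimately show ?thesis
    unfolding card_units_below[OF p pj] by (simp add: of_nat_diff mult.commute)
qed

lemma newton_exp_self_eq_digit_formula:
  assumes p: "p > 1" and n: "n \<ge> 1" and j: "j < p ^ n" and pj: "\<not> p dvd j"
  shows "int (newton_exp p j j)
    = - 1 + (\<Sum>s\<le>n. (int (digit p j s) * int (s + 1) - int (digit p j (s + 1)) * int (s + 2)) * int p ^ s)"
  using newton_exp_self_eq_sum_div[OF p j pj] digit_formula_eq_sum_div[of p n j] p n j by simp

section \<open>Subrings of the complex numbers and matrices over them\<close>

locale complex_subring =
  fixes S :: "complex set"
  assumes zero_mem [simp]: "0 \<in> S" and one_mem [simp]: "1 \<in> S"
    and add_mem: "x \<in> S \<Longrightarrow> y \<in> S \<Longrightarrow> x + y \<in> S"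
    and uminus_mem: "x \<in> S \<Longrightarrow> - x \<in> S"
    and mult_mem: "x \<in> S \<Longrightarrow> y \<in> S \<Longrightarrow> x * y \<in> S"
begin

lemma diff_mem: "x \<in> S \<Longrightarrow> y \<in> S \<Longrightarrow> x - y \<in> S"
  using add_mem[of x "- y"] uminus_mem[of y] by simp

lemma sum_mem: "(\<And>i. i \<in> A \<Longrightarrow> f i \<in> S) \<Longrightarrow> sum f A \<in> S"
  by (induction A rule: infinite_finite_induct) (auto intro: add_mem)

lemma prod_mem: "(\<And>i. i \<in> A \<Longrightarrow> f i \<in> S) \<Longrightarrow> prod f A \<in> S"
  by (induction A rule: infinite_finite_induct) (auto intro: mult_mem)

lemma power_mem: "x \<in> S \<Longrightarrow> x ^ k \<in> S"
  using prod_mem[of "{..<k}" "\<lambda>_. x"] by simp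

lemma unit_inI:
  assumes "u \<in> S" "v \<in> S" "u * v = 1"
  shows "unit_in S u"
proof -
  have "u \<noteq> 0" "v * u = 1" using assms(3) by (auto simp: mult.commute)
  then have "1 / u = v" by (simp add: divide_eq_eq)
  then show ?thesis unfolding unit_in_def using assms \<open>u \<noteq> 0\<close> by simp
qed

lemma unit_in_mem: "unit_in S u \<Longrightarrow> u \<in> S"
  and unit_in_nonzero: "unit_in S u \<Longrightarrow> u \<noteq> 0"
  and unit_in_inverse_mem: "unit_in S u \<Longrightarrow> 1 / u \<in> S"
  unfolding unit_in_def by simp_all

lemma unit_in_one [simp]: "unit_in S 1"
  by (rule unit_inI) simp_all

lemma unit_in_mult:
  assumes "unit_in S u" "unit_in S v"
  shows "unit_in S (u * v)"
proof (rule unit_inI)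
  show "u * v \<in> S" "(1 / u) * (1 / v) \<in> S"
    using assms by (intro mult_mem; simp add: unit_in_def)+
  show "u * v * ((1 / u) * (1 / v)) = 1" using assms by (simp add: unit_in_def)
qed

lemma unit_in_divide: "unit_in S u \<Longrightarrow> unit_in S v \<Longrightarrow> unit_in S (u / v)"
  using unit_in_mult[of u "1 / v"] unit_inI[of "1 / v" v] by (simp add: unit_in_def)

lemma unit_in_uminus: "unit_in S u \<Longrightarrow> unit_in S (- u)"
  by (rule unit_inI[of _ "- (1 / u)"]) (auto simp: unit_in_def intro: uminus_mem)

lemma unit_in_prod: "(\<And>i. i \<in> A \<Longrightarrow> unit_in S (f i)) \<Longrightarrow> unit_in S (prod f A)"
  by (induction A rule: infinite_finite_induct) (auto intro: unit_in_mult)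

lemma mat_over_mult:
  assumes "mat_over S A" "mat_over S B" "A \<in> carrier_mat k l" "B \<in> carrier_mat l m"
  shows "mat_over S (A * B)"
  using assms unfolding mat_over_def
  by (auto simp: scalar_prod_def intro!: sum_mem mult_mem)

lemma mat_over_smult: "c \<in> S \<Longrightarrow> mat_over S A \<Longrightarrow> mat_over S (c \<cdot>\<^sub>m A)"
  unfolding mat_over_def by (simp add: mult_mem)

lemma det_mem:
  assumes "mat_over S A" "A \<in> carrier_mat k k"
  shows "det A \<in> S"
  unfolding det_def'[OF assms(2)]
proof (intro sum_mem mult_mem prod_mem)
  fix \<pi> i assume "\<pi> \<in> {\<pi>. \<pi> permutes {0..<k}}" "i \<in> {0..<k}"
  then show "A $$ (i, \<pi> i) \<in> S"
    using assms unfolding mat_over_def by (auto simp: permutes_in_image)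
qed (auto simp: sign_def intro: uminus_mem)

lemma mat_over_adj_mat:
  assumes "mat_over S A" "A \<in> carrier_mat k k"
  shows "mat_over S (adj_mat A)"
  unfolding mat_over_def
proof (intro allI impI)
  fix i j assume "i < dim_row (adj_mat A)" "j < dim_col (adj_mat A)"
  then have ij: "i < k" "j < k" using assms(2) by (auto simp: adj_mat_def)
  have "mat_over S (mat_delete A j i)"
    using assms ij unfolding mat_over_def mat_delete_def by auto
  then have "det (mat_delete A j i) \<in> S"
    using det_mem mat_delete_carrier[OF assms(2)] by blast
  then have "cofactor A j i \<in> S"
    unfolding cofactor_def by (intro mult_mem power_mem uminus_mem) simp_all
  then show "adj_mat A $$ (i, j) \<in> S" using ij assms(2) by (simp add: adj_mat_def)
qed

lemma invertible_over_if_det_unit: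
  assumes A: "A \<in> carrier_mat k k" and "mat_over S A" and u: "unit_in S (det A)"
  shows "invertible_over S k A"
proof -
  define A' where "A' = (1 / det A) \<cdot>\<^sub>m adj_mat A"
  have adj: "adj_mat A \<in> carrier_mat k k" "A * adj_mat A = det A \<cdot>\<^sub>m 1\<^sub>m k" "adj_mat A * A = det A \<cdot>\<^sub>m 1\<^sub>m k"
    using adj_mat[OF A] by auto
  have "det A \<noteq> 0" using unit_in_nonzero[OF u] .
  then have "A * A' = 1\<^sub>m k" "A' * A = 1\<^sub>m k"
    unfolding A'_def mult_smult_distrib[OF A adj(1)] mult_smult_assoc_mat[OF adj(1) A] adj(2,3)
    by (auto intro!: eq_matI)
  moreover have "mat_over S A'"
    unfolding A'_def using unit_in_inverse_mem[OF u] mat_over_adj_mat[OF assms(2) A]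
    by (rule mat_over_smult)
  moreover have "A' \<in> carrier_mat k k" unfolding A'_def using adj by simp
  ultimately show ?thesis unfolding invertible_over_def using assms by blast
qed

lemma invertible_overE:
  assumes "invertible_over S k A"
  obtains A' where "invertible_over S k A'" "A * A' = 1\<^sub>m k" "A' * A = 1\<^sub>m k"
  using assms unfolding invertible_over_def by blast

lemma invertible_over_cancel:
  assumes U: "invertible_over S k U" and V: "invertible_over S k V" and A: "A \<in> carrier_mat k k"
  obtains U' V' where "invertible_over S k U'" "invertible_over S k V'" "A = U' * (U * A * V) * V'"
proof -
  obtain U' where U': "invertible_over S k U'" "U * U' = 1\<^sub>m k" "U' * U = 1\<^sub>m k"
    by (rule invertible_overE[OF U])
  obtain V' where V': "invertible_over S k V'" "V * V' = 1\<^sub>m k" "V' * V = 1\<^sub>m k"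
    by (rule invertible_overE[OF V])
  have c: "U \<in> carrier_mat k k" "V \<in> carrier_mat k k" "U' \<in> carrier_mat k k" "V' \<in> carrier_mat k k"
    using U V U' V' unfolding invertible_over_def by auto
  have "U * A * V * V' = U * A * (V * V')" using c A by (intro assoc_mult_mat) auto
  then have "U * A * V * V' = U * A" using c A V' by simp
  moreover have "U' * (U * A * V) * V' = U' * (U * A * V * V')"
    using c A by (intro assoc_mult_mat) auto
  moreover have "U' * (U * A) = U' * U * A" using c A by (intro assoc_mult_mat[symmetric]) auto
  ultimately have "U' * (U * A * V) * V' = A" using c A U' by simp
  then show thesis using that U' V' by simp
qed

lemma coeff_mult_mem:
  "(\<And>i. coeff f i \<in> S) \<Longrightarrow> (\<And>i. coeff g i \<in> S) \<Longrightarrow> coeff (f * g) i \<in> S"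
  by (auto simp: coeff_mult intro!: sum_mem mult_mem)

lemma coeff_prod_mem:
  "(\<And>k i. k \<in> K \<Longrightarrow> coeff (f k) i \<in> S) \<Longrightarrow> coeff (prod f K) i \<in> S"
proof (induction K arbitrary: i rule: infinite_finite_induct)
  case (insert k K)
  then show ?case by (simp add: coeff_mult_mem)
qed (simp_all add: coeff_1)

end

section \<open>Uniqueness of elementary divisor exponents\<close>

definition capped_exp_sum :: "nat \<Rightarrow> (nat \<Rightarrow> nat) \<Rightarrow> nat \<Rightarrow> nat" where
  "capped_exp_sum r e m = (\<Sum>a<r. min (e a) m)"

lemma capped_exp_sum_Suc:
  "capped_exp_sum r e (Suc m) = capped_exp_sum r e m + card {a\<in>{..<r}. m < e a}"
proof -
  have "capped_exp_sum r e (Suc m) = (\<Sum>a<r. min (e a) m + (if m < e a then 1 else 0))"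
    unfolding capped_exp_sum_def by (intro sum.cong) auto
  then show ?thesis unfolding capped_exp_sum_def by (simp add: sum.distrib flip: sum.inter_filter)
qed

text \<open>For monotone e, the increments card {a\<in>{..<r}. m < e a} of capped_exp_sum r e
  (capped_exp_sum_Suc) determine e.\<close>
lemma capped_exp_sum_inj:
  fixes e f :: "nat \<Rightarrow> nat"
  assumes e: "\<forall>a b. a \<le> b \<longrightarrow> b < r \<longrightarrow> e a \<le> e b"
    and f: "\<forall>a b. a \<le> b \<longrightarrow> b < r \<longrightarrow> f a \<le> f b"
    and eq: "\<And>m. capped_exp_sum r e m = capped_exp_sum r f m"
    and a: "a < r"
  shows "e a = f a"
proof -
  have count_eq: "card {b\<in>{..<r}. m < e b} = card {b\<in>{..<r}. m < f b}" for m
    using capped_exp_sum_Suc[of r e m] capped_exp_sum_Suc[of r f m] eq[of m] eq[of "Suc m"] by simp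
  have less_absurd: False
    if g: "\<forall>a b. a \<le> b \<longrightarrow> b < r \<longrightarrow> g a \<le> g b" and h: "\<forall>a b. a \<le> b \<longrightarrow> b < r \<longrightarrow> h a \<le> h b"
      and count: "card {b\<in>{..<r}. g a < g b} = card {b\<in>{..<r}. g a < h b}"
      and lt: "g a < h a" for g h :: "nat \<Rightarrow> nat"
  proof -
    have "{a..<r} \<subseteq> {b\<in>{..<r}. g a < h b}" using h lt by fastforce
    then have "r - a \<le> card {b\<in>{..<r}. g a < h b}" using card_mono[of _ "{a..<r}"] by fastforce
    moreover have "{b\<in>{..<r}. g a < g b} \<subseteq> {a<..<r}" using g a by (auto simp: not_le[symmetric])
    then have "card {b\<in>{..<r}. g a < g b} \<le> r - Suc a" using card_mono[of "{a<..<r}"] by fastforce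
    ultimately show False using count a by simp
  qed
  show ?thesis
    using less_absurd[OF e f count_eq] less_absurd[OF f e count_eq[symmetric]] by (cases "e a" "f a" rule: linorder_cases) auto
qed

lemma det_mat_diag: "det (mat_diag k f) = (\<Prod>a<k. f a :: 'a :: comm_ring_1)"
proof -
  have "upper_triangular (mat_diag k f)" unfolding upper_triangular_def mat_diag_def by auto
  then have "det (mat_diag k f) = prod_list (diag_mat (mat_diag k f))"
    by (rule det_upper_triangular[OF _ mat_diag_dim])
  then show ?thesis by (simp add: prod_list_diag_prod mat_diag_def atLeast0LessThan)
qed

lemma elem_div_exps_mat_diag:
  "elem_div_exps S t r A e \<longleftrightarrow> (\<forall>a b. a \<le> b \<longrightarrow> b < r \<longrightarrow> e a \<le> e b) \<and>
     (\<exists>U V u. invertible_over S r U \<and> invertible_over S r V \<and> (\<forall>a<r. unit_in S (u a)) \<and>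
        U * A * V = mat_diag r (\<lambda>a. u a * t ^ e a))"
proof -
  have "mat r r (\<lambda>(a, b). if a = b then u a * t ^ e a else 0) = mat_diag r (\<lambda>a. u a * t ^ e a)" for u
    unfolding mat_diag_def by (rule cong_mat) auto
  then show ?thesis unfolding elem_div_exps_def by simp
qed

locale complex_subring_nonunit = complex_subring +
  fixes t :: complex
  assumes t_mem: "t \<in> S" and inverse_t_notin: "1 / t \<notin> S"
begin

lemma t_nonzero: "t \<noteq> 0"
  using inverse_t_notin by auto \<comment> \<open>as 1 / 0 = 0\<close>

lemma exp_le_if_pow_unit_eq_pow_mult:
  assumes w: "unit_in S w" and s: "s \<in> S" and eq: "t ^ a * w = t ^ b * s"
  shows "b \<le> a"
proof (rule ccontr)
  assume "\<not> b \<le> a"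
  then have "b = a + Suc (b - a - 1)" by simp
  then have "t ^ b = t ^ a * (t * t ^ (b - a - 1))" by (metis power_add power_Suc)
  then have "w = t * (t ^ (b - a - 1) * s)" using eq t_nonzero by (simp add: mult.assoc)
  then have "1 / t = t ^ (b - a - 1) * s * (1 / w)"
    using t_nonzero unit_in_nonzero[OF w] by (simp add: field_simps)
  also have "\<dots> \<in> S"
    using t_mem s unit_in_inverse_mem[OF w] by (intro mult_mem power_mem)
  finally show False using inverse_t_notin by simp
qed

text \<open>For a diagonal matrix with exponents e, the largest such k is capped_exp_sum r e m, and
  the property is invariant under equivalence over S: this pins down e.\<close>
definition det_pow_dvd :: "nat \<Rightarrow> complex mat \<Rightarrow> nat \<Rightarrow> nat \<Rightarrow> bool" where
  "det_pow_dvd r A m k \<longleftrightarrow> (\<forall>X Y. X \<in> carrier_mat r r \<longrightarrow> mat_over S X \<longrightarrow>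
     Y \<in> carrier_mat r r \<longrightarrow> mat_over S Y \<longrightarrow> (\<exists>s\<in>S. det (A * X + t ^ m \<cdot>\<^sub>m Y) = t ^ k * s))"

lemma det_pow_dvd_mult_left:
  assumes P: "invertible_over S r P" and A: "A \<in> carrier_mat r r" and dvd: "det_pow_dvd r A m k"
  shows "det_pow_dvd r (P * A) m k"
  unfolding det_pow_dvd_def
proof (intro allI impI)
  fix X Y assume X: "X \<in> carrier_mat r r" "mat_over S X" and Y: "Y \<in> carrier_mat r r" "mat_over S Y"
  obtain P' where P': "invertible_over S r P'" "P * P' = 1\<^sub>m r" "P' * P = 1\<^sub>m r"
    by (rule invertible_overE[OF P])
  have c: "P \<in> carrier_mat r r" "mat_over S P" "P' \<in> carrier_mat r r" "mat_over S P'"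
    using P P' unfolding invertible_over_def by auto
  have P'Y: "P' * Y \<in> carrier_mat r r" "mat_over S (P' * Y)"
    using c Y mat_over_mult[OF c(4) Y(2) c(3) Y(1)] by auto
  have "P * (P' * Y) = P * P' * Y" by (rule assoc_mult_mat[OF c(1,3) Y(1), symmetric])
  then have PP'Y: "P * (P' * Y) = Y" using P'(2) Y by simp
  have "P * (A * X + t ^ m \<cdot>\<^sub>m (P' * Y)) = P * (A * X) + P * (t ^ m \<cdot>\<^sub>m (P' * Y))"
    by (rule mult_add_distrib_mat[OF c(1) mult_carrier_mat[OF A X(1)] smult_carrier_mat[OF P'Y(1)]])
  also have "\<dots> = P * A * X + t ^ m \<cdot>\<^sub>m Y"
    by (simp only: mult_smult_distrib[OF c(1) P'Y(1)] PP'Y assoc_mult_mat[OF c(1) A X(1)])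
  finally have eq: "P * A * X + t ^ m \<cdot>\<^sub>m Y = P * (A * X + t ^ m \<cdot>\<^sub>m (P' * Y))" by (rule sym)
  obtain s where s: "s \<in> S" "det (A * X + t ^ m \<cdot>\<^sub>m (P' * Y)) = t ^ k * s"
    using dvd[unfolded det_pow_dvd_def, rule_format, OF X P'Y] by blast
  have "A * X + t ^ m \<cdot>\<^sub>m (P' * Y) \<in> carrier_mat r r" using A X P'Y by auto
  then have "det (P * A * X + t ^ m \<cdot>\<^sub>m Y) = det P * (t ^ k * s)"
    unfolding eq s(2)[symmetric] by (rule det_mult[OF c(1)])
  also have "\<dots> = t ^ k * (det P * s)" by (simp only: mult.left_commute)
  finally show "\<exists>s\<in>S. det (P * A * X + t ^ m \<cdot>\<^sub>m Y) = t ^ k * s"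
    using mult_mem[OF det_mem[OF c(2,1)] s(1)] by (rule bexI[of _ "det P * s"])
qed

lemma det_pow_dvd_mult_right:
  assumes Q: "invertible_over S r Q" and A: "A \<in> carrier_mat r r" and dvd: "det_pow_dvd r A m k"
  shows "det_pow_dvd r (A * Q) m k"
  unfolding det_pow_dvd_def
proof (intro allI impI)
  fix X Y assume X: "X \<in> carrier_mat r r" "mat_over S X" and Y: "Y \<in> carrier_mat r r" "mat_over S Y"
  have c: "Q \<in> carrier_mat r r" "mat_over S Q" using Q unfolding invertible_over_def by auto
  have "Q * X \<in> carrier_mat r r" "mat_over S (Q * X)" using c X mat_over_mult[OF c(2) X(2) c(1) X(1)] by auto
  from dvd[unfolded det_pow_dvd_def, rule_format, OF this Y]
  show "\<exists>s\<in>S. det (A * Q * X + t ^ m \<cdot>\<^sub>m Y) = t ^ k * s"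
    by (simp only: assoc_mult_mat[OF A c(1) X(1)])
qed

lemma det_pow_dvd_equiv:
  assumes "invertible_over S r U" "invertible_over S r V" "A \<in> carrier_mat r r" "det_pow_dvd r A m k"
  shows "det_pow_dvd r (U * A * V) m k"
  using assms det_pow_dvd_mult_left det_pow_dvd_mult_right
  by (metis invertible_over_def mult_carrier_mat)

lemma det_pow_dvd_mat_diag:
  assumes u: "\<forall>a<r. u a \<in> S"
  shows "det_pow_dvd r (mat_diag r (\<lambda>a. u a * t ^ e a)) m (capped_exp_sum r e m)"
  unfolding det_pow_dvd_def
proof (intro allI impI)
  fix X Y assume X: "X \<in> carrier_mat r r" "mat_over S X" and Y: "Y \<in> carrier_mat r r" "mat_over S Y"
  define Z where "Z = mat r r (\<lambda>(a, b). u a * t ^ (e a - min (e a) m) * X $$ (a, b)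
    + t ^ (m - min (e a) m) * Y $$ (a, b))"
  have Z: "Z \<in> carrier_mat r r" "mat_over S Z"
    using X Y u t_mem unfolding Z_def mat_over_def by (auto intro!: add_mem mult_mem power_mem)
  have entry: "u a * t ^ e a * x + t ^ m * y
      = t ^ min (e a) m * (u a * t ^ (e a - min (e a) m) * x + t ^ (m - min (e a) m) * y)" for a x y
  proof -
    have "t ^ min (e a) m * (u a * t ^ (e a - min (e a) m) * x + t ^ (m - min (e a) m) * y)
        = u a * (t ^ min (e a) m * t ^ (e a - min (e a) m)) * x + (t ^ min (e a) m * t ^ (m - min (e a) m)) * y"
      by (simp add: algebra_simps)
    also have "\<dots> = u a * t ^ e a * x + t ^ m * y" by (simp flip: power_add)
    finally show ?thesis by (rule sym)
  qed
  have "mat_diag r (\<lambda>a. u a * t ^ e a) * X + t ^ m \<cdot>\<^sub>m Y = mat_diag r (\<lambda>a. t ^ min (e a) m) * Z"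
    using X Y unfolding mat_diag_mult_left[OF X(1)] mat_diag_mult_left[OF Z(1)]
    by (intro eq_matI) (simp_all add: Z_def entry)
  then have "det (mat_diag r (\<lambda>a. u a * t ^ e a) * X + t ^ m \<cdot>\<^sub>m Y) = t ^ capped_exp_sum r e m * det Z"
    using det_mult[OF mat_diag_dim Z(1)] by (simp add: det_mat_diag capped_exp_sum_def power_sum)
  then show "\<exists>s\<in>S. det (mat_diag r (\<lambda>a. u a * t ^ e a) * X + t ^ m \<cdot>\<^sub>m Y) = t ^ capped_exp_sum r e m * s"
    using det_mem[OF Z(2,1)] by (rule bexI[of _ "det Z"])
qed

lemma det_pow_dvd_mat_diag_le:
  assumes u: "\<forall>a<r. unit_in S (u a)" and dvd: "det_pow_dvd r (mat_diag r (\<lambda>a. u a * t ^ e a)) m k"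
  shows "k \<le> capped_exp_sum r e m"
proof -
  define X where "X = mat_diag r (\<lambda>a. if e a \<le> m then 1 else 0 :: complex)"
  define Y where "Y = mat_diag r (\<lambda>a. if e a \<le> m then 0 else 1 :: complex)"
  define w where "w a = (if e a \<le> m then u a else 1)" for a
  have XY: "X \<in> carrier_mat r r" "mat_over S X" "Y \<in> carrier_mat r r" "mat_over S Y"
    unfolding X_def Y_def mat_over_def mat_diag_def by auto
  obtain s where s: "s \<in> S" "det (mat_diag r (\<lambda>a. u a * t ^ e a) * X + t ^ m \<cdot>\<^sub>m Y) = t ^ k * s"
    using dvd[unfolded det_pow_dvd_def, rule_format, OF XY] by blast
  have "mat_diag r (\<lambda>a. u a * t ^ e a) * X + t ^ m \<cdot>\<^sub>m Y = mat_diag r (\<lambda>a. w a * t ^ min (e a) m)"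
    unfolding X_def Y_def w_def mat_diag_diag by (intro eq_matI) (simp_all add: mat_diag_def min_def)
  then have "det (mat_diag r (\<lambda>a. u a * t ^ e a) * X + t ^ m \<cdot>\<^sub>m Y) = t ^ capped_exp_sum r e m * prod w {..<r}"
    unfolding capped_exp_sum_def by (simp add: det_mat_diag prod.distrib power_sum mult.commute)
  moreover have "unit_in S (prod w {..<r})" using u unfolding w_def by (intro unit_in_prod) auto
  ultimately show ?thesis using exp_le_if_pow_unit_eq_pow_mult s by (metis mult.commute)
qed

lemma capped_exp_sum_le_if_elem_div_exps:
  assumes A: "A \<in> carrier_mat r r" and e: "elem_div_exps S t r A e" and f: "elem_div_exps S t r A f"
  shows "capped_exp_sum r e m \<le> capped_exp_sum r f m"
proof -
  obtain U V u where U: "invertible_over S r U" and V: "invertible_over S r V"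
    and u: "\<forall>a<r. unit_in S (u a)" and D: "U * A * V = mat_diag r (\<lambda>a. u a * t ^ e a)"
    using e[unfolded elem_div_exps_mat_diag, THEN conjunct2] by blast
  obtain U2 V2 u2 where U2: "invertible_over S r U2" and V2: "invertible_over S r V2"
    and u2: "\<forall>a<r. unit_in S (u2 a)" and D2: "U2 * A * V2 = mat_diag r (\<lambda>a. u2 a * t ^ f a)"
    using f[unfolded elem_div_exps_mat_diag, THEN conjunct2] by blast
  obtain U' V' where U': "invertible_over S r U'" and V': "invertible_over S r V'"
    and A_eq: "A = U' * (U * A * V) * V'"
    using invertible_over_cancel[OF U V A] .
  have diag_dvd: "det_pow_dvd r (U * A * V) m (capped_exp_sum r e m)"
    unfolding D using u unit_in_mem by (intro det_pow_dvd_mat_diag) blast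
  have "U * A * V \<in> carrier_mat r r" using U V A unfolding invertible_over_def by auto
  from det_pow_dvd_equiv[OF U' V' this diag_dvd] have "det_pow_dvd r A m (capped_exp_sum r e m)"
    by (simp only: A_eq[symmetric])
  then have "det_pow_dvd r (U2 * A * V2) m (capped_exp_sum r e m)"
    by (rule det_pow_dvd_equiv[OF U2 V2 A])
  then show ?thesis unfolding D2 by (rule det_pow_dvd_mat_diag_le[OF u2])
qed

theorem elem_div_exps_unique:
  assumes "A \<in> carrier_mat r r" "elem_div_exps S t r A e" "elem_div_exps S t r A f" "a < r"
  shows "e a = f a"
proof (rule capped_exp_sum_inj[OF _ _ _ assms(4)])
  show "\<forall>a b. a \<le> b \<longrightarrow> b < r \<longrightarrow> e a \<le> e b" "\<forall>a b. a \<le> b \<longrightarrow> b < r \<longrightarrow> f a \<le> f b"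
    using assms(2,3) unfolding elem_div_exps_def by blast+
  show "capped_exp_sum r e m = capped_exp_sum r f m" for m
    using capped_exp_sum_le_if_elem_div_exps[OF assms(1)] assms(2,3) by (simp add: antisym)
qed

end

section \<open>The localization at p and roots of unity\<close>

lemma Zloc_intro: "\<not> int p dvd b \<Longrightarrow> of_int a / of_int b \<in> Zloc p"
  unfolding Zloc_def by blast

lemma of_int_in_Zloc: "prime p \<Longrightarrow> of_int a \<in> Zloc p"
  using Zloc_intro[of p 1 a] by (simp add: prime_nat_iff)

lemma complex_subring_Zloc:
  assumes p: "prime p"
  shows "complex_subring (Zloc p)"
proof
  have pp: "prime (int p)" using p by simp
  show "0 \<in> Zloc p" "1 \<in> Zloc p" using of_int_in_Zloc[OF p, of 0] of_int_in_Zloc[OF p, of 1] by simp_all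
next
  fix x assume "x \<in> Zloc p"
  then obtain a b where x: "x = of_int a / of_int b" "\<not> int p dvd b" unfolding Zloc_def by blast
  then have "- x = of_int (- a) / of_int b" by simp
  then show "- x \<in> Zloc p" using Zloc_intro[OF x(2), of "- a"] by simp
next
  fix x y assume "x \<in> Zloc p" "y \<in> Zloc p"
  then obtain a b c d where x: "x = of_int a / of_int b" "\<not> int p dvd b"
    and y: "y = of_int c / of_int d" "\<not> int p dvd d"
    unfolding Zloc_def by blast
  have bd: "\<not> int p dvd b * d" using x(2) y(2) p by (simp add: prime_dvd_mult_iff)
  have "b \<noteq> 0" "d \<noteq> 0" using x(2) y(2) by auto
  then have "x + y = of_int (a * d + c * b) / of_int (b * d)"
    using x y by (simp add: field_simps)
  then show "x + y \<in> Zloc p" using Zloc_intro[OF bd, of "a * d + c * b"] by simp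
  have "x * y = of_int (a * c) / of_int (b * d)" using x y by simp
  then show "x * y \<in> Zloc p" using Zloc_intro[OF bd, of "a * c"] by simp
qed

lemma Zloc_common_denominator:
  fixes c :: "nat \<Rightarrow> complex"
  assumes p: "prime p" and c: "\<forall>k. c k \<in> Zloc p"
  obtains B A where "\<not> int p dvd B" "\<forall>k<N. of_int B * c k = (of_int (A k) :: complex)"
proof -
  have "\<forall>k. \<exists>a b. c k = of_int a / of_int b \<and> \<not> int p dvd b" using c unfolding Zloc_def by blast
  then obtain a b where ab: "\<And>k. c k = of_int (a k) / of_int (b k)" "\<And>k. \<not> int p dvd b k" by metis
  define B where "B = (\<Prod>k<N. b k)"
  have "\<not> int p dvd B" unfolding B_def using p ab(2) by (simp add: prime_dvd_prod_iff)
  moreover have "of_int B * c k = of_int (a k * (\<Prod>j\<in>{..<N} - {k}. b j))" if "k < N" for k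
  proof -
    have "b k \<noteq> 0" using ab(2)[of k] by auto
    moreover have "B = b k * (\<Prod>j\<in>{..<N} - {k}. b j)"
      unfolding B_def using that prod.remove[of "{..<N}" k b] by simp
    ultimately show ?thesis using ab(1)[of k] by simp
  qed
  ultimately show thesis by (intro that[of B "\<lambda>k. a k * (\<Prod>j\<in>{..<N} - {k}. b j)"]) auto
qed

lemma inj_on_power_primitive_root:
  fixes \<eta> :: complex
  assumes \<eta>: "\<eta> ^ d = 1" and \<eta>_primitive: "\<forall>k. 0 < k \<and> k < d \<longrightarrow> \<eta> ^ k \<noteq> 1"
  shows "inj_on (\<lambda>k. \<eta> ^ k) {..<d}"
proof (rule inj_onI)
  fix a b assume ab: "a \<in> {..<d}" "b \<in> {..<d}" "\<eta> ^ a = \<eta> ^ b"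
  then have "\<eta> \<noteq> 0" using \<eta> by (auto simp: power_0_left)
  have less: False if "x < y" "y < d" "\<eta> ^ x = \<eta> ^ y" for x y
  proof -
    have "\<eta> ^ x * \<eta> ^ (y - x) = \<eta> ^ y" using that(1) by (simp flip: power_add)
    then have "\<eta> ^ x * \<eta> ^ (y - x) = \<eta> ^ x * 1" using that(3) by simp
    then have "\<eta> ^ (y - x) = 1" using \<open>\<eta> \<noteq> 0\<close> by simp
    then show False using \<eta>_primitive that by auto
  qed
  show "a = b" using less[of a b] less[of b a] ab by (metis lessThan_iff linorder_neqE_nat)
qed

lemma roots_of_unity_eq_powers:
  fixes \<eta> :: complex
  assumes d: "d > 0" and \<eta>: "\<eta> ^ d = 1" and \<eta>_primitive: "\<forall>k. 0 < k \<and> k < d \<longrightarrow> \<eta> ^ k \<noteq> 1"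
  shows "{x. x ^ d = 1} = (\<lambda>k. \<eta> ^ k) ` {..<d}"
proof (rule sym, rule card_subset_eq)
  show "finite {x::complex. x ^ d = 1}" using d by (intro finite_roots_unity) simp
  have "(\<eta> ^ k) ^ d = 1" for k by (metis \<eta> mult.commute power_mult power_one)
  then show "(\<lambda>k. \<eta> ^ k) ` {..<d} \<subseteq> {x. x ^ d = 1}" by auto
  show "card ((\<lambda>k. \<eta> ^ k) ` {..<d}) = card {x::complex. x ^ d = 1}"
    using card_image[OF inj_on_power_primitive_root[OF \<eta> \<eta>_primitive]] card_roots_unity_eq[OF d] by simp
qed

lemma prod_linear_factors_primitive_root:
  fixes \<eta> :: complex
  assumes d: "d > 0" and \<eta>: "\<eta> ^ d = 1" and \<eta>_primitive: "\<forall>k. 0 < k \<and> k < d \<longrightarrow> \<eta> ^ k \<noteq> 1"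
  shows "(\<Prod>k<d. [:-(\<eta> ^ k), 1:]) = monom 1 d - 1"
proof -
  define Q :: "complex poly" where "Q = monom 1 d - 1"
  have poly_Q: "poly Q x = x ^ d - 1" for x by (simp add: Q_def poly_monom)
  have "rsquarefree Q"
    unfolding rsquarefree_roots
  proof (intro allI notI)
    fix a assume "poly Q a = 0 \<and> poly (pderiv Q) a = 0"
    then have "a ^ d = 1" "of_nat d * a ^ (d - 1) = 0"
      by (auto simp: poly_Q Q_def pderiv_diff pderiv_monom poly_monom)
    then show False using d by (auto simp: power_0_left)
  qed
  then have "Q = smult (lead_coeff Q) (\<Prod>x|poly Q x = 0. [:-x, 1:])"
    by (rule complex_poly_decompose_rsquarefree[symmetric])
  moreover have "lead_coeff Q = 1"
  proof -
    have "coeff Q d = 1" using d by (simp add: Q_def)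
    moreover have "degree Q \<le> d" unfolding Q_def by (intro degree_diff_le) (simp_all add: degree_monom_le)
    then have "degree Q = d" using le_degree[of Q d] \<open>coeff Q d = 1\<close> by simp
    ultimately show ?thesis by simp
  qed
  moreover have "{x. poly Q x = 0} = (\<lambda>k. \<eta> ^ k) ` {..<d}"
    unfolding poly_Q using roots_of_unity_eq_powers[OF d \<eta> \<eta>_primitive] by simp
  ultimately show ?thesis
    using prod.reindex[OF inj_on_power_primitive_root[OF \<eta> \<eta>_primitive], of "\<lambda>x. [:-x, 1:]"]
    by (simp add: Q_def)
qed

lemma prod_one_minus_primitive_root:
  fixes \<eta> c :: complex
  assumes d: "d > 0" and \<eta>: "\<eta> ^ d = 1" and \<eta>_primitive: "\<forall>k. 0 < k \<and> k < d \<longrightarrow> \<eta> ^ k \<noteq> 1"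
    and c: "c \<noteq> 0"
  shows "(\<Prod>k<d. (1 - c * \<eta>^k)) = 1 - c ^ d"
proof -
  have "poly (\<Prod>k<d. [:-(\<eta>^k), 1:]) (1/c) = poly (monom 1 d - 1) (1/c)"
    using prod_linear_factors_primitive_root[OF d \<eta> \<eta>_primitive] by simp
  then have e: "(\<Prod>k<d. (1/c - \<eta>^k)) = (1/c) ^ d - 1" by (simp add: poly_prod poly_monom)
  have "(\<Prod>k<d. (1 - c * \<eta>^k)) = (\<Prod>k<d. c * (1/c - \<eta>^k))"
    using c by (intro prod.cong) (auto simp: field_simps)
  also have "\<dots> = c ^ d * (\<Prod>k<d. (1/c - \<eta>^k))" by (simp add: prod.distrib)
  also have "\<dots> = c ^ d * ((1/c) ^ d - 1)" by (simp add: e)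
  also have "\<dots> = c ^ d * (1/c) ^ d - c ^ d" by (simp only: right_diff_distrib mult_1_right)
  also have "c ^ d * (1/c) ^ d = 1"
  proof -
    have "c ^ d * (1/c) ^ d = (c * (1/c)) ^ d" by (rule power_mult_distrib[symmetric])
    also have "\<dots> = 1" using c by simp
    finally show ?thesis .
  qed
  finally show ?thesis .
qed

lemma det_cong_power_if_offdiag_dvd:
  fixes N :: "int mat" and P B :: int
  assumes N: "N \<in> carrier_mat m m"
    and off: "\<And>i j. i < m \<Longrightarrow> j < m \<Longrightarrow> i \<noteq> j \<Longrightarrow> P dvd N $$ (i, j)"
    and dg: "\<And>i. i < m \<Longrightarrow> [N $$ (i, i) = B] (mod P)"
  shows "[det N = B ^ m] (mod P)"
proof -
  let ?PU = "{\<pi>. \<pi> permutes {0..<m}}"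
  let ?f = "\<lambda>\<pi>. signof \<pi> * (\<Prod>i = 0..<m. N $$ (i, \<pi> i))"
  have fin: "finite ?PU" by (simp add: finite_permutations)
  have idin: "id \<in> ?PU" by (simp add: permutes_id)
  have detN: "det N = ?f id + sum ?f (?PU - {id})"
    unfolding det_def'[OF N] using sum.remove[OF fin idin, of ?f] by simp
  moreover have "[?f id = B ^ m] (mod P)"
  proof -
    have "[(\<Prod>i = 0..<m. N $$ (i, i)) = (\<Prod>i = 0..<m. B)] (mod P)"
      by (rule cong_prod) (use dg in auto)
    then show ?thesis by (simp add: sign_id)
  qed
  moreover have "[sum ?f (?PU - {id}) = 0] (mod P)"
    unfolding cong_0_iff
  proof (rule dvd_sum)
    fix \<pi> assume "\<pi> \<in> ?PU - {id}"
    then have pi: "\<pi> permutes {0..<m}" "\<pi> \<noteq> id" by auto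
    obtain i where i: "\<pi> i \<noteq> i" using pi(2) by (metis eq_id_iff)
    have im: "i < m" using i pi(1) by (meson atLeastLessThan_iff permutes_not_in zero_le)
    have pim: "\<pi> i < m" using pi(1) im by (simp add: permutes_in_image)
    have "P dvd N $$ (i, \<pi> i)" using off[OF im pim] i by simp
    moreover have "N $$ (i, \<pi> i) dvd (\<Prod>i = 0..<m. N $$ (i, \<pi> i))"
      using im by (intro dvd_prodI) auto
    ultimately show "P dvd ?f \<pi>" by (meson dvd_mult dvd_trans)
  qed
  ultimately have "[?f id + sum ?f (?PU - {id}) = B ^ m + 0] (mod P)" using cong_add by blast
  then show ?thesis using detN by simp
qed

lemma prod_one_minus_primitive_root_powers:
  fixes \<omega> :: complex
  assumes d: "d > 0" and \<omega>: "\<omega> ^ d = 1" and \<omega>_primitive: "\<forall>k. 0 < k \<and> k < d \<longrightarrow> \<omega> ^ k \<noteq> 1"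
  shows "(\<Prod>k\<in>{1..<d}. 1 - \<omega> ^ k) = of_nat d"
proof -
  have "{..<d} = insert 0 {1..<d}" using d by auto
  then have "[:-1, 1:] * (\<Prod>k\<in>{1..<d}. [:-(\<omega> ^ k), 1:]) = monom 1 d - 1"
    using prod_linear_factors_primitive_root[OF d \<omega> \<omega>_primitive] by simp
  also have "monom 1 d - 1 = [:-1, 1:] * (\<Sum>i<d. monom (1::complex) i)"
  proof (rule poly_ext)
    fix x :: complex
    have "poly (monom 1 d - 1) x = (x - 1) * (\<Sum>i<d. x ^ i)"
      by (simp add: poly_monom power_diff_1_eq)
    then show "poly (monom 1 d - 1) x = poly ([:-1, 1:] * (\<Sum>i<d. monom 1 i)) x"
      by (simp add: poly_sum poly_monom left_diff_distrib)
  qed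
  finally have "[:-1, 1:] * (\<Prod>k\<in>{1..<d}. [:-(\<omega> ^ k), 1:]) = [:-1, 1:] * (\<Sum>i<d. monom (1::complex) i)" .
  then have "(\<Prod>k\<in>{1..<d}. [:-(\<omega> ^ k), 1:]) = (\<Sum>i<d. monom (1::complex) i)"
    using mult_left_cancel[of "[:-1, 1:] :: complex poly"] by simp
  then have "poly (\<Prod>k\<in>{1..<d}. [:-(\<omega> ^ k), 1:]) 1 = poly (\<Sum>i<d. monom (1::complex) i) 1"
    by simp
  then show ?thesis by (simp add: poly_prod poly_sum poly_monom)
qed

section \<open>The ring T and its uniformizer t\<close>

locale cyclotomic_prime_power =
  fixes p n :: nat and z :: complex
  assumes p: "prime p" and n: "n \<ge> 1"
    and z_pow_order: "z ^ (p ^ n) = 1" and z_primitive: "\<forall>k. 0 < k \<and> k < p ^ n \<longrightarrow> z ^ k \<noteq> 1"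
begin

abbreviation "q \<equiv> p ^ n"
abbreviation "T \<equiv> cyc_ring p n z"
abbreviation "t \<equiv> 1 - z"

sublocale Zloc: complex_subring "Zloc p"
  by (rule complex_subring_Zloc[OF p])

lemma p_gt1: "p > 1"
  using p prime_gt_1_nat by blast

lemma q_gt1: "q > 1"
  using p_gt1 n one_less_power[of p n] by simp

lemma q_pos: "q > 0"
  using q_gt1 by linarith

lemma z_pow_mod: "z ^ m = z ^ (m mod q)"
  by (metis div_mult_mod_eq mult.commute power_add power_mult power_one z_pow_order mult_1)

lemma z_pow_eq_1_iff: "z ^ m = 1 \<longleftrightarrow> q dvd m"
proof
  assume "z ^ m = 1"
  then have "z ^ (m mod q) = 1" using z_pow_mod by simp
  moreover have "m mod q < q" using q_pos by simp
  ultimately have "m mod q = 0" using z_primitive by (metis neq0_conv)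
  then show "q dvd m" by auto
qed (auto simp: power_mult z_pow_order)

lemma cyc_ringI: "(\<And>k. c k \<in> Zloc p) \<Longrightarrow> (\<Sum>k<q. c k * z ^ k) \<in> T"
  unfolding cyc_ring_def by blast

lemma Zloc_mult_zpow_mem: "c \<in> Zloc p \<Longrightarrow> c * z ^ m \<in> T"
proof -
  assume c: "c \<in> Zloc p"
  have "(\<Sum>k<q. (if k = m mod q then c else 0) * z ^ k) = (\<Sum>k<q. if k = m mod q then c * z ^ k else 0)"
    by (rule sum.cong) auto
  also have "\<dots> = c * z ^ (m mod q)" using q_pos by (simp add: sum.delta)
  finally have "(\<Sum>k<q. (if k = m mod q then c else 0) * z ^ k) = c * z ^ (m mod q)" .
  then show ?thesis using cyc_ringI[of "\<lambda>k. if k = m mod q then c else 0"] c z_pow_mod[of m] by simp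
qed

lemma cyc_ring_add: "x \<in> T \<Longrightarrow> y \<in> T \<Longrightarrow> x + y \<in> T"
proof -
  assume "x \<in> T" "y \<in> T"
  then obtain c d where "x = (\<Sum>k<q. c k * z ^ k)" "y = (\<Sum>k<q. d k * z ^ k)"
    "\<forall>k. c k \<in> Zloc p" "\<forall>k. d k \<in> Zloc p"
    unfolding cyc_ring_def by blast
  then show "x + y \<in> T"
    using cyc_ringI[of "\<lambda>k. c k + d k"] by (simp add: sum.distrib distrib_right Zloc.add_mem)
qed

lemma cyc_ring_sum: "(\<And>i. i \<in> A \<Longrightarrow> f i \<in> T) \<Longrightarrow> sum f A \<in> T"
  using Zloc_mult_zpow_mem[OF Zloc.zero_mem, of 0]
  by (induction A rule: infinite_finite_induct) (auto intro: cyc_ring_add)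

sublocale T: complex_subring T
proof
  show "0 \<in> T" "1 \<in> T"
    using Zloc_mult_zpow_mem[OF Zloc.zero_mem, of 0] Zloc_mult_zpow_mem[OF Zloc.one_mem, of 0] by simp_all
  fix x y assume x: "x \<in> T" and y: "y \<in> T"
  then obtain c d where c: "x = (\<Sum>k<q. c k * z ^ k)" "\<forall>k. c k \<in> Zloc p"
    and d: "y = (\<Sum>k<q. d k * z ^ k)" "\<forall>k. d k \<in> Zloc p"
    unfolding cyc_ring_def by blast
  show "x + y \<in> T" using x y by (rule cyc_ring_add)
  have "x * y = (\<Sum>k<q. \<Sum>l<q. (c k * d l) * z ^ (k + l))"
    by (simp add: c d sum_product power_add mult_ac)
  also have "\<dots> \<in> T"
    using c d by (intro cyc_ring_sum Zloc_mult_zpow_mem Zloc.mult_mem) auto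
  finally show "x * y \<in> T" .
next
  fix x assume "x \<in> T"
  then obtain c where "x = (\<Sum>k<q. c k * z ^ k)" "\<forall>k. c k \<in> Zloc p"
    unfolding cyc_ring_def by blast
  then show "- x \<in> T" using cyc_ringI[of "\<lambda>k. - c k"] by (simp add: sum_negf Zloc.uminus_mem)
qed

lemma zpow_mem: "z ^ m \<in> T"
  using Zloc_mult_zpow_mem[OF Zloc.one_mem] by simp

lemma t_mem: "t \<in> T"
  using zpow_mem[of 1] by (intro T.diff_mem) simp_all

lemma unit_in_zpow: "unit_in T (z ^ k)"
proof (rule T.unit_inI[OF zpow_mem zpow_mem])
  have "k + k * (q - 1) = k * q" using q_gt1 by (cases q) auto
  then show "z ^ k * z ^ (k * (q - 1)) = 1" using z_pow_eq_1_iff[of "k * q"] by (simp flip: power_add)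
qed

text \<open>With w = z^(p^s) and m m' congruent to 1 modulo p^(n-s), both (1 - w^m) / (1 - w) and
  (1 - w) / (1 - w^m) = (1 - (w^m)^m') / (1 - w^m) are geometric sums in T.\<close>
lemma one_minus_zpow_coprime_factor:
  assumes s: "s < n" and m: "\<not> p dvd m"
  obtains u where "unit_in T u" "1 - z ^ (p ^ s * m) = (1 - z ^ p ^ s) * u"
proof -
  define w where "w = z ^ p ^ s"
  define g where "g = (\<Sum>k<m. w ^ k)"
  have g: "1 - w ^ m = (1 - w) * g" unfolding g_def by (rule one_diff_power_eq)
  have "coprime m (p ^ (n - s))"
    using prime_imp_coprime[OF p m] by (simp add: coprime_commute)
  then obtain m' where "[m * m' = 1] (mod p ^ (n - s))"
    using cong_solve_coprime_nat unfolding One_nat_def by blast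
  then have "[p ^ s * (m * m') = p ^ s * 1] (mod p ^ s * p ^ (n - s))" by (rule cong_cmult_leftI)
  then have "[p ^ s * m * m' = p ^ s] (mod q)" using s by (simp add: mult.assoc flip: power_add)
  then have w_inverse_exp: "(w ^ m) ^ m' = w"
    unfolding w_def power_mult[symmetric] by (metis cong_def z_pow_mod)
  define h where "h = (\<Sum>k<m'. (w ^ m) ^ k)"
  have h: "1 - (w ^ m) ^ m' = (1 - w ^ m) * h" unfolding h_def by (rule one_diff_power_eq)
  have w_ne_1: "w \<noteq> 1"
  proof
    assume "w = 1"
    then have "q dvd p ^ s" unfolding w_def z_pow_eq_1_iff .
    moreover have "p ^ s < q" "p ^ s > 0" using s p_gt1 by simp_all
    ultimately show False by (simp add: nat_dvd_not_less)
  qed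
  have "(1 - w) * 1 = (1 - w ^ m) * h" using h w_inverse_exp by simp
  also have "\<dots> = (1 - w) * (g * h)" unfolding g by (simp add: mult.assoc)
  finally have "g * h = 1" using w_ne_1 by simp
  moreover have "g \<in> T" "h \<in> T" unfolding g_def h_def w_def by (auto intro!: T.sum_mem T.power_mem zpow_mem)
  ultimately have "unit_in T g" by (intro T.unit_inI)
  moreover have "1 - z ^ (p ^ s * m) = (1 - z ^ p ^ s) * g"
    using g unfolding w_def by (simp add: power_mult)
  ultimately show thesis by (rule that)
qed

lemma one_minus_zpow_coprime:
  assumes "\<not> p dvd m"
  obtains u where "unit_in T u" "1 - z ^ m = t * u"
  using one_minus_zpow_coprime_factor[of 0 m] n assms by auto

lemma one_minus_zpow_prime_power:
  assumes s: "s < n"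
  obtains u where "unit_in T u" "1 - z ^ p ^ s = t ^ p ^ s * u"
proof -
  define \<eta> where "\<eta> = z ^ p ^ (n - s)"
  define d where "d = p ^ s"
  have d: "d > 0" unfolding d_def using p_gt1 by simp
  have q: "q = p ^ (n - s) * d" unfolding d_def using s by (simp flip: power_add)
  have \<eta>: "\<eta> ^ d = 1" unfolding \<eta>_def by (simp flip: power_mult q add: z_pow_order)
  have \<eta>_primitive: "\<forall>k. 0 < k \<and> k < d \<longrightarrow> \<eta> ^ k \<noteq> 1"
    unfolding \<eta>_def power_mult[symmetric] using z_primitive q p_gt1 by auto
  have "z \<noteq> 0" using z_pow_order q_pos by (metis power_0_left less_not_refl zero_neq_one)
  then have "1 - z ^ d = (\<Prod>k<d. 1 - z * \<eta> ^ k)"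
    by (rule prod_one_minus_primitive_root[OF d \<eta> \<eta>_primitive, symmetric])
  moreover have "\<exists>u. unit_in T u \<and> 1 - z * \<eta> ^ k = t * u" for k
  proof -
    have "p dvd p ^ (n - s) * k" using s by (intro dvd_mult2 dvd_power) auto
    then have "p dvd 1 + p ^ (n - s) * k \<longleftrightarrow> p dvd 1" by (rule dvd_add_left_iff)
    then have "\<not> p dvd 1 + p ^ (n - s) * k" using p_gt1 by simp
    then obtain u where "unit_in T u" "1 - z ^ (1 + p ^ (n - s) * k) = t * u"
      by (rule one_minus_zpow_coprime)
    moreover have "z * \<eta> ^ k = z ^ (1 + p ^ (n - s) * k)" unfolding \<eta>_def by (simp add: power_add power_mult)
    ultimately show ?thesis by auto
  qed
  then obtain U where U: "\<And>k. unit_in T (U k)" "\<And>k. 1 - z * \<eta> ^ k = t * U k" by metis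
  ultimately have "1 - z ^ d = t ^ d * (\<Prod>k<d. U k)" by (simp add: prod.distrib)
  then show thesis using that T.unit_in_prod[of "{..<d}" U] U(1) unfolding d_def by blast
qed

lemma one_minus_zpow_prime_power_mult:
  assumes s: "s < n" and m: "\<not> p dvd m"
  obtains u where "unit_in T u" "1 - z ^ (p ^ s * m) = t ^ p ^ s * u"
proof -
  obtain u1 where u1: "unit_in T u1" "1 - z ^ (p ^ s * m) = (1 - z ^ p ^ s) * u1"
    using one_minus_zpow_coprime_factor[OF s m] .
  obtain u2 where u2: "unit_in T u2" "1 - z ^ p ^ s = t ^ p ^ s * u2"
    using one_minus_zpow_prime_power[OF s] .
  have "1 - z ^ (p ^ s * m) = t ^ p ^ s * (u2 * u1)" using u1 u2 by simp
  then show thesis using that T.unit_in_mult[OF u2(1) u1(1)] by blast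
qed

lemma one_minus_zpow:
  assumes m: "0 < m" "m < q"
  obtains u where "unit_in T u" "1 - z ^ m = t ^ p ^ multiplicity p m * u"
proof -
  define s where "s = multiplicity p m"
  have "m \<noteq> 0" "\<not> is_unit p" using m p_gt1 by auto
  then obtain m' where m': "m = p ^ s * m'" "\<not> p dvd m'"
    unfolding s_def by (rule multiplicity_decompose')
  moreover have "m' > 0" using m m'(1) by (cases m') auto
  ultimately have "p ^ s \<le> m" by simp
  then have "p ^ s < q" using m by simp
  then have "s < n" by (rule power_less_imp_less_exp[OF p_gt1])
  then obtain u where "unit_in T u" "1 - z ^ (p ^ s * m') = t ^ p ^ s * u"
    using one_minus_zpow_prime_power_mult m'(2) by blast
  then show thesis using that m'(1) unfolding s_def by simp
qed

lemma of_nat_p_eq_t_power: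
  obtains u where "unit_in T u" "of_nat p = t ^ ((p - 1) * p ^ (n - 1)) * u"
proof -
  define \<omega> where "\<omega> = z ^ p ^ (n - 1)"
  have q: "q = p ^ (n - 1) * p" using n by (simp flip: power_Suc2)
  have \<omega>: "\<omega> ^ p = 1" unfolding \<omega>_def power_mult[symmetric] q[symmetric] by (rule z_pow_order)
  have \<omega>_primitive: "\<forall>k. 0 < k \<and> k < p \<longrightarrow> \<omega> ^ k \<noteq> 1"
    unfolding \<omega>_def power_mult[symmetric] using z_primitive q p_gt1 by auto
  have "\<exists>u. unit_in T u \<and> 1 - \<omega> ^ k = t ^ p ^ (n - 1) * u" if "k \<in> {1..<p}" for k
  proof -
    have "\<not> p dvd k" using that by (auto dest: dvd_imp_le)
    moreover have "n - 1 < n" using n by simp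
    ultimately obtain u where "unit_in T u" "1 - z ^ (p ^ (n - 1) * k) = t ^ p ^ (n - 1) * u"
      using one_minus_zpow_prime_power_mult by blast
    then show ?thesis unfolding \<omega>_def by (auto simp: power_mult)
  qed
  then obtain U where U: "\<And>k. k \<in> {1..<p} \<Longrightarrow> unit_in T (U k) \<and> 1 - \<omega> ^ k = t ^ p ^ (n - 1) * U k"
    by metis
  have "of_nat p = (\<Prod>k\<in>{1..<p}. 1 - \<omega> ^ k)"
    using prod_one_minus_primitive_root_powers[OF _ \<omega> \<omega>_primitive] p_gt1 by simp
  also have "\<dots> = (\<Prod>k\<in>{1..<p}. t ^ p ^ (n - 1) * U k)" using U by (intro prod.cong) auto
  also have "\<dots> = t ^ ((p - 1) * p ^ (n - 1)) * (\<Prod>k\<in>{1..<p}. U k)"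
    by (simp add: prod.distrib power_mult[symmetric] mult.commute)
  finally show thesis using that T.unit_in_prod[of "{1..<p}" U] U by blast
qed

lemma sum_zpow_shift:
  assumes j: "j < q"
  shows "(\<Sum>k<q. f k * z ^ (k + j)) = (\<Sum>l<q. f ((l + q - j) mod q) * z ^ l)"
proof (rule sum.reindex_bij_witness[of _ "\<lambda>l. (l + q - j) mod q" "\<lambda>k. (k + j) mod q"])
  fix k assume k: "k \<in> {..<q}"
  have "((k + j) mod q + q - j) mod q = k"
  proof (cases "k + j < q")
    case False
    then have "(k + j) mod q = k + j - q" using k j by (simp add: le_mod_geq)
    then show ?thesis using k j False by simp
  qed (use k in simp)
  then show "((k + j) mod q + q - j) mod q = k" "(k + j) mod q \<in> {..<q}"
    "f (((k + j) mod q + q - j) mod q) * z ^ ((k + j) mod q) = f k * z ^ (k + j)"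
    using q_pos z_pow_mod[of "k + j"] by simp_all
next
  fix l assume l: "l \<in> {..<q}"
  have "((l + q - j) mod q + j) mod q = l"
  proof (cases "l < j")
    case True
    then have "(l + q - j) mod q = l + q - j" using l j by simp
    then show ?thesis using l j True by simp
  next
    case False
    then have "(l + q - j) mod q = l - j" using l j by (simp add: le_mod_geq)
    then show ?thesis using l j False by simp
  qed
  then show "((l + q - j) mod q + j) mod q = l" "(l + q - j) mod q \<in> {..<q}"
    using q_pos by simp_all
qed

text \<open>The vector (z^l)_l lies in the kernel of the integer matrix B I - p C with C circulant,
  whose determinant is B^q modulo p.\<close>
lemma int_dvd_if_of_int_eq_p_mult_sum_zpow:
  assumes B: "of_int B = of_nat p * (\<Sum>k<q. of_int (A k) * z ^ k)"
  shows "int p dvd B"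
proof -
  define N :: "int mat" where "N = mat q q (\<lambda>(j, l). (if j = l then B else 0) - int p * A ((l + q - j) mod q))"
  define v :: "complex vec" where "v = vec q (\<lambda>l. z ^ l)"
  have N: "N \<in> carrier_mat q q" unfolding N_def by simp
  have "map_mat of_int N *\<^sub>v v = 0\<^sub>v q"
  proof (rule eq_vecI)
    fix j assume "j < dim_vec (0\<^sub>v q :: complex vec)"
    then have j: "j < q" by simp
    have "of_int B * z ^ j = of_nat p * (\<Sum>k<q. of_int (A k) * z ^ (k + j))"
      unfolding B by (simp add: sum_distrib_right sum_distrib_left power_add mult_ac)
    also have "\<dots> = of_nat p * (\<Sum>l<q. of_int (A ((l + q - j) mod q)) * z ^ l)"
      by (simp only: sum_zpow_shift[OF j])
    finally have row: "of_int B * z ^ j - of_nat p * (\<Sum>l<q. of_int (A ((l + q - j) mod q)) * z ^ l) = 0"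
      by simp
    have "(map_mat of_int N *\<^sub>v v) $ j = (\<Sum>l<q. of_int (N $$ (j, l)) * z ^ l)"
      using j unfolding N_def v_def by (simp add: mult_mat_vec_def scalar_prod_def atLeast0LessThan)
    also have "\<dots> = (\<Sum>l<q. (if j = l then of_int B * z ^ l else 0)
        - of_nat p * (of_int (A ((l + q - j) mod q)) * z ^ l))"
      using j unfolding N_def by (intro sum.cong) (auto simp: algebra_simps)
    also have "\<dots> = 0" using j row by (simp add: sum_subtractf sum_distrib_left)
    finally show "(map_mat of_int N *\<^sub>v v) $ j = 0\<^sub>v q $ j" using j by simp
  qed (simp add: N_def)
  moreover have v: "v $ 0 = 1" "v \<in> carrier_vec q" using q_pos unfolding v_def by simp_all
  moreover have "v \<noteq> 0\<^sub>v q" using v(1) q_pos by auto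
  ultimately have "det (map_mat (of_int :: int \<Rightarrow> complex) N) = 0"
    using det_0_iff_vec_prod_zero[of "map_mat of_int N" q] N by auto
  then have "det N = 0" by simp
  moreover have "[det N = B ^ q] (mod int p)"
    using N by (rule det_cong_power_if_offdiag_dvd) (auto simp: N_def cong_iff_dvd_diff)
  ultimately have "int p dvd B ^ q" by (simp add: cong_0_iff cong_sym_eq[of 0])
  then show "int p dvd B" using p prime_dvd_power[of "int p" B q] by simp
qed

lemma inverse_p_notin: "1 / of_nat p \<notin> T"
proof
  assume "1 / of_nat p \<in> T"
  then obtain c where c: "1 / of_nat p = (\<Sum>k<q. c k * z ^ k)" "\<forall>k. c k \<in> Zloc p"
    unfolding cyc_ring_def by blast
  obtain B A where B: "\<not> int p dvd B" and A: "\<forall>k<q. of_int B * c k = of_int (A k)"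
    using Zloc_common_denominator[OF p c(2), of q] by blast
  have "of_int B = of_nat p * (of_int B * (1 / of_nat p) :: complex)" using p_gt1 by simp
  also have "of_int B * (1 / of_nat p) = (\<Sum>k<q. of_int (A k) * z ^ k)"
    unfolding c(1) sum_distrib_left using A by (intro sum.cong refl) (simp flip: mult.assoc)
  finally show False using int_dvd_if_of_int_eq_p_mult_sum_zpow B by blast
qed

lemma inverse_t_notin: "1 / t \<notin> T"
proof
  assume t_inverse: "1 / t \<in> T"
  obtain u where u: "unit_in T u" "of_nat p = t ^ ((p - 1) * p ^ (n - 1)) * u"
    by (rule of_nat_p_eq_t_power)
  have "t \<noteq> 0" using z_primitive q_gt1 by force
  then have "1 / of_nat p = (1 / t) ^ ((p - 1) * p ^ (n - 1)) * (1 / u)"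
    using u(2) T.unit_in_nonzero[OF u(1)] by (simp add: power_one_over)
  also have "\<dots> \<in> T" using t_inverse T.unit_in_inverse_mem[OF u(1)] by (intro T.mult_mem T.power_mem)
  finally show False using inverse_p_notin by simp
qed

sublocale T: complex_subring_nonunit T t
  by unfold_locales (rule t_mem, rule inverse_t_notin)

lemma zpow_diff_eq_t_power:
  assumes k: "k < y" and y: "y < q"
  obtains u where "unit_in T u" "z ^ y - z ^ k = t ^ p ^ multiplicity p (y - k) * u"
proof -
  have "0 < y - k" "y - k < q" using k y by auto
  then obtain u where u: "unit_in T u" "1 - z ^ (y - k) = t ^ p ^ multiplicity p (y - k) * u"
    by (rule one_minus_zpow)
  have "z ^ y = z ^ k * z ^ (y - k)" using k by (simp flip: power_add)
  then have "z ^ y - z ^ k = - (z ^ k) * (1 - z ^ (y - k))" by (simp add: algebra_simps)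
  also have "\<dots> = t ^ p ^ multiplicity p (y - k) * (- (z ^ k) * u)" using u(2) by simp
  finally have "z ^ y - z ^ k = t ^ p ^ multiplicity p (y - k) * (- (z ^ k) * u)" .
  then show thesis using that T.unit_in_mult[OF T.unit_in_uminus[OF unit_in_zpow] u(1)] by blast
qed

lemma prod_zpow_diff_eq_t_power:
  assumes xy: "x \<le> y" and y: "y < q"
  obtains u where "unit_in T u" "(\<Prod>k\<in>units_below p x. z ^ y - z ^ k) = t ^ newton_exp p x y * u"
proof -
  have "\<forall>k\<in>units_below p x. \<exists>u. unit_in T u \<and> z ^ y - z ^ k = t ^ p ^ multiplicity p (y - k) * u"
    using zpow_diff_eq_t_power xy y unfolding units_below_def by (metis (no_types, lifting) mem_Collect_eq order.strict_trans2)
  then obtain U where U: "\<And>k. k \<in> units_below p x \<Longrightarrow> unit_in T (U k) \<and> z ^ y - z ^ k = t ^ p ^ multiplicity p (y - k) * U k"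
    by metis
  have "(\<Prod>k\<in>units_below p x. z ^ y - z ^ k) = (\<Prod>k\<in>units_below p x. t ^ p ^ multiplicity p (y - k) * U k)"
    using U by (intro prod.cong) auto
  also have "\<dots> = t ^ newton_exp p x y * (\<Prod>k\<in>units_below p x. U k)"
    unfolding newton_exp_def by (simp add: prod.distrib power_sum)
  finally show thesis using that T.unit_in_prod[of "units_below p x" U] U by blast
qed

section \<open>The Newton basis and the elementary divisors of the Dedekind matrix\<close>

abbreviation "r \<equiv> (p - 1) * p ^ (n - 1)"
abbreviation res :: "nat \<Rightarrow> nat" where "res a \<equiv> cyc_units p n ! a"

lemma length_cyc_units: "length (cyc_units p n) = r"
proof -
  have "set (cyc_units p n) = units_below p q" unfolding cyc_units_def units_below_def by auto
  then show ?thesis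
    using distinct_card[of "cyc_units p n"] card_units_below_prime_power[OF p n]
    by (simp add: cyc_units_def)
qed

lemma res_less: "a < r \<Longrightarrow> res a < q" and res_coprime: "a < r \<Longrightarrow> \<not> p dvd res a"
  using nth_mem[of a "cyc_units p n"] length_cyc_units unfolding cyc_units_def by auto

lemma res_strict_mono: "a < b \<Longrightarrow> b < r \<Longrightarrow> res a < res b"
  using sorted_wrt_nth_less[of "(<)" "cyc_units p n"] length_cyc_units
  unfolding cyc_units_def by (simp add: sorted_wrt_filter sorted_wrt_upt)

lemma res_mono: "a \<le> b \<Longrightarrow> b < r \<Longrightarrow> res a \<le> res b"
  using res_strict_mono by (cases "a = b") (auto simp: order.order_iff_strict)

lemma units_below_res: "a < r \<Longrightarrow> units_below p (res a) = res ` {..<a}"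
proof (intro equalityI subsetI)
  fix k assume a: "a < r" and k: "k \<in> units_below p (res a)"
  then have "k \<in> set (cyc_units p n)"
    using res_less[OF a] unfolding units_below_def cyc_units_def by auto
  then obtain b where b: "b < r" "res b = k" using length_cyc_units by (auto simp: in_set_conv_nth)
  have "b < a"
  proof (rule ccontr)
    assume "\<not> b < a"
    then have "res a \<le> res b" using res_mono b(1) by simp
    then show False using b(2) k unfolding units_below_def by simp
  qed
  then show "k \<in> res ` {..<a}" using b by auto
next
  fix k assume a: "a < r" and "k \<in> res ` {..<a}"
  then obtain b where "b < a" "k = res b" by auto
  then show "k \<in> units_below p (res a)"
    using a res_strict_mono[of b a] res_coprime[of b] unfolding units_below_def by simp
qed

lemma card_units_below_res: "a < r \<Longrightarrow> card (units_below p (res a)) = a"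
proof -
  assume a: "a < r"
  have "distinct (cyc_units p n)" by (simp add: cyc_units_def)
  then have "inj_on res {..<a}"
    using length_cyc_units a by (intro inj_onI) (simp add: nth_eq_iff_index_eq)
  then show ?thesis using units_below_res[OF a] card_image by fastforce
qed

lemma res_Ncount:
  assumes j: "j < q" "\<not> p dvd j"
  shows "Ncount p j - 1 < r" "res (Ncount p j - 1) = j"
proof -
  have "j \<in> set (cyc_units p n)" using j unfolding cyc_units_def by simp
  then obtain a where a: "a < r" "res a = j" using length_cyc_units by (auto simp: in_set_conv_nth)
  have "{i. i \<le> j \<and> \<not> p dvd i} = insert j (units_below p j)" using j unfolding units_below_def by auto
  then have "Ncount p j = card (units_below p j) + 1" unfolding Ncount_def by (simp add: units_below_def)
  then have "Ncount p j - 1 = a" using card_units_below_res[OF a(1)] a(2) by simp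
  then show "Ncount p j - 1 < r" "res (Ncount p j - 1) = j" using a by simp_all
qed

definition newton_poly :: "nat \<Rightarrow> complex poly" where
  "newton_poly c = (\<Prod>k\<in>units_below p (res c). [:- (z ^ k), 1:])"

lemma degree_newton_poly: "c < r \<Longrightarrow> degree (newton_poly c) = c"
  unfolding newton_poly_def by (subst degree_prod_sum_eq) (auto simp: card_units_below_res)

lemma lead_coeff_newton_poly: "lead_coeff (newton_poly c) = 1"
  unfolding newton_poly_def by (simp add: lead_coeff_prod)

lemma coeff_newton_poly_mem: "coeff (newton_poly c) i \<in> T"
  unfolding newton_poly_def
  by (intro T.coeff_prod_mem) (auto simp: coeff_pCons split: nat.split intro: T.uminus_mem zpow_mem)

definition newton_coeff_mat :: "complex mat" where
  "newton_coeff_mat = mat r r (\<lambda>(i, c). coeff (newton_poly c) i)"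

definition newton_value_mat :: "complex mat" where
  "newton_value_mat = mat r r (\<lambda>(a, c). poly (newton_poly c) (z ^ res a))"

lemma invertible_over_newton_coeff_mat: "invertible_over T r newton_coeff_mat"
proof (rule T.invertible_over_if_det_unit)
  show carrier: "newton_coeff_mat \<in> carrier_mat r r" unfolding newton_coeff_mat_def by simp
  show "mat_over T newton_coeff_mat"
    unfolding newton_coeff_mat_def mat_over_def using coeff_newton_poly_mem by simp
  have "upper_triangular newton_coeff_mat"
    unfolding upper_triangular_def newton_coeff_mat_def using degree_newton_poly by (auto simp: coeff_eq_0)
  then have "det newton_coeff_mat = (\<Prod>i = 0..<r. newton_coeff_mat $$ (i, i))"
    using det_upper_triangular[OF _ carrier] by (simp add: prod_list_diag_prod newton_coeff_mat_def)
  also have "\<dots> = 1"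
  proof (intro prod.neutral ballI)
    fix c assume "c \<in> {0..<r}"
    then show "newton_coeff_mat $$ (c, c) = 1"
      using lead_coeff_newton_poly[of c] degree_newton_poly[of c] by (simp add: newton_coeff_mat_def)
  qed
  finally show "unit_in T (det newton_coeff_mat)" by simp
qed

lemma dedekind_mat_mult_newton_coeff_mat: "dedekind_mat p n z * newton_coeff_mat = newton_value_mat"
proof (rule eq_matI)
  fix a c assume "a < dim_row newton_value_mat" "c < dim_col newton_value_mat"
  then have ac: "a < r" "c < r" unfolding newton_value_mat_def by auto
  have "(dedekind_mat p n z * newton_coeff_mat) $$ (a, c)
      = (\<Sum>i<r. coeff (newton_poly c) i * (z ^ res a) ^ i)"
    using ac unfolding dedekind_mat_def newton_coeff_mat_def
    by (simp add: scalar_prod_def atLeast0LessThan mult.commute flip: power_mult)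
  also have "\<dots> = (\<Sum>i\<le>degree (newton_poly c). coeff (newton_poly c) i * (z ^ res a) ^ i)"
  proof (rule sum.mono_neutral_right)
    show "{..degree (newton_poly c)} \<subseteq> {..<r}" using degree_newton_poly[OF ac(2)] ac(2) by auto
  qed (auto simp: coeff_eq_0)
  also have "\<dots> = poly (newton_poly c) (z ^ res a)" by (simp add: poly_altdef)
  finally show "(dedekind_mat p n z * newton_coeff_mat) $$ (a, c) = newton_value_mat $$ (a, c)"
    using ac unfolding newton_value_mat_def by simp
qed (simp_all add: dedekind_mat_def newton_coeff_mat_def newton_value_mat_def)

lemma newton_value_mat_entry:
  "a < r \<Longrightarrow> c < r \<Longrightarrow> newton_value_mat $$ (a, c) = (\<Prod>k\<in>units_below p (res c). z ^ res a - z ^ k)"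
  unfolding newton_value_mat_def newton_poly_def by (simp add: poly_prod)

lemma newton_value_mat_above_diag:
  assumes "a < c" "c < r"
  shows "newton_value_mat $$ (a, c) = 0"
proof -
  have "res a \<in> units_below p (res c)"
    using assms res_strict_mono res_coprime unfolding units_below_def by auto
  then show ?thesis using assms by (auto simp: newton_value_mat_entry intro!: prod_zero bexI[of _ "res a"])
qed

lemma newton_value_mat_factor:
  assumes "c \<le> a" "a < r"
  obtains u where "unit_in T u" "newton_value_mat $$ (a, c) = t ^ newton_exp p (res c) (res a) * u"
proof -
  obtain u where "unit_in T u"
      "(\<Prod>k\<in>units_below p (res c). z ^ res a - z ^ k) = t ^ newton_exp p (res c) (res a) * u"
    by (rule prod_zpow_diff_eq_t_power[OF res_mono[OF assms] res_less[OF assms(2)]])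
  then show thesis using that assms by (simp add: newton_value_mat_entry)
qed

definition dedekind_exp :: "nat \<Rightarrow> nat" where
  "dedekind_exp c = newton_exp p (res c) (res c)"

lemma dedekind_exp_le:
  assumes "c \<le> a" "a < r"
  shows "dedekind_exp c \<le> newton_exp p (res c) (res a)"
  unfolding dedekind_exp_def using assms res_mono res_less res_coprime
  by (intro newton_exp_self_le[OF p_gt1]) auto

lemma dedekind_exp_mono:
  assumes "c \<le> a" "a < r"
  shows "dedekind_exp c \<le> dedekind_exp a"
  using dedekind_exp_le[OF assms] newton_exp_mono_left[OF res_mono[OF assms]]
  unfolding dedekind_exp_def by (rule order.trans)

definition newton_value_unit :: "nat \<Rightarrow> complex" where
  "newton_value_unit c = newton_value_mat $$ (c, c) / t ^ dedekind_exp c"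

lemma newton_value_unit:
  assumes "c < r"
  shows "unit_in T (newton_value_unit c)" "newton_value_mat $$ (c, c) = newton_value_unit c * t ^ dedekind_exp c"
proof -
  obtain u where "unit_in T u" "newton_value_mat $$ (c, c) = t ^ dedekind_exp c * u"
    using newton_value_mat_factor[OF le_refl assms] unfolding dedekind_exp_def .
  then show "unit_in T (newton_value_unit c)" "newton_value_mat $$ (c, c) = newton_value_unit c * t ^ dedekind_exp c"
    using T.t_nonzero unfolding newton_value_unit_def by simp_all
qed

lemma newton_value_mat_diag_nonzero: "c < r \<Longrightarrow> newton_value_mat $$ (c, c) \<noteq> 0"
  using newton_value_unit T.unit_in_nonzero T.t_nonzero by simp

definition newton_value_lower :: "complex mat" where
  "newton_value_lower = mat r r (\<lambda>(a, c). newton_value_mat $$ (a, c) / newton_value_mat $$ (c, c))"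

lemma newton_value_lower_mem:
  assumes "a < r" "c < r"
  shows "newton_value_lower $$ (a, c) \<in> T"
proof (cases "c \<le> a")
  case True
  obtain u where u: "unit_in T u" "newton_value_mat $$ (a, c) = t ^ newton_exp p (res c) (res a) * u"
    using newton_value_mat_factor[OF True assms(1)] .
  have "t ^ newton_exp p (res c) (res a) = t ^ dedekind_exp c * t ^ (newton_exp p (res c) (res a) - dedekind_exp c)"
    using dedekind_exp_le[OF True assms(1)] by (simp flip: power_add)
  then have "newton_value_lower $$ (a, c)
      = t ^ (newton_exp p (res c) (res a) - dedekind_exp c) * (u / newton_value_unit c)"
    using assms u newton_value_unit[OF assms(2)] T.t_nonzero
    unfolding newton_value_lower_def by simp
  also have "\<dots> \<in> T"
    by (intro T.mult_mem T.power_mem t_mem T.unit_in_mem[OF T.unit_in_divide[OF u(1) newton_value_unit(1)[OF assms(2)]]])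
  finally show ?thesis .
next
  case False
  then show ?thesis using assms newton_value_mat_above_diag unfolding newton_value_lower_def by simp
qed

lemma invertible_over_newton_value_lower: "invertible_over T r newton_value_lower"
proof (rule T.invertible_over_if_det_unit)
  show carrier: "newton_value_lower \<in> carrier_mat r r" unfolding newton_value_lower_def by simp
  show "mat_over T newton_value_lower"
    unfolding mat_over_def using newton_value_lower_mem carrier by auto
  have "det newton_value_lower = prod_list (diag_mat newton_value_lower)"
    using newton_value_mat_above_diag by (intro det_lower_triangular[OF _ carrier]) (simp add: newton_value_lower_def)
  also have "\<dots> = 1"
    unfolding prod_list_diag_prod using newton_value_mat_diag_nonzero
    by (intro prod.neutral) (simp add: newton_value_lower_def)
  finally show "unit_in T (det newton_value_lower)" by simp
qed

lemma newton_value_mat_factorization: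
  "newton_value_mat = newton_value_lower * mat_diag r (\<lambda>c. newton_value_unit c * t ^ dedekind_exp c)"
proof -
  have "mat_diag r (\<lambda>c. newton_value_unit c * t ^ dedekind_exp c) = mat_diag r (\<lambda>c. newton_value_mat $$ (c, c))"
    unfolding mat_diag_def using newton_value_unit(2) by (intro cong_mat) auto
  moreover have "newton_value_lower * mat_diag r (\<lambda>c. newton_value_mat $$ (c, c))
      = mat r r (\<lambda>(a, c). newton_value_lower $$ (a, c) * newton_value_mat $$ (c, c))"
    by (rule mat_diag_mult_right) (simp add: newton_value_lower_def)
  moreover have "\<dots> = newton_value_mat"
    using newton_value_mat_diag_nonzero unfolding newton_value_lower_def
    by (intro eq_matI) (simp_all add: newton_value_mat_def)
  ultimately show ?thesis by simp
qed

theorem elem_div_exps_dedekind_mat: "elem_div_exps T t r (dedekind_mat p n z) dedekind_exp"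
proof -
  obtain L' where L': "invertible_over T r L'" "newton_value_lower * L' = 1\<^sub>m r" "L' * newton_value_lower = 1\<^sub>m r"
    by (rule T.invertible_overE[OF invertible_over_newton_value_lower])
  have c: "L' \<in> carrier_mat r r" "newton_value_lower \<in> carrier_mat r r"
    "dedekind_mat p n z \<in> carrier_mat r r" "newton_coeff_mat \<in> carrier_mat r r"
    using L'(1) unfolding invertible_over_def newton_value_lower_def dedekind_mat_def newton_coeff_mat_def
    by auto
  have "L' * dedekind_mat p n z * newton_coeff_mat = L' * newton_value_mat"
    unfolding dedekind_mat_mult_newton_coeff_mat[symmetric] by (rule assoc_mult_mat[OF c(1,3,4)])
  also have "\<dots> = L' * newton_value_lower * mat_diag r (\<lambda>c. newton_value_unit c * t ^ dedekind_exp c)"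
    unfolding newton_value_mat_factorization by (rule assoc_mult_mat[OF c(1,2) mat_diag_dim, symmetric])
  also have "\<dots> = mat_diag r (\<lambda>c. newton_value_unit c * t ^ dedekind_exp c)"
    unfolding L'(3) by (rule left_mult_one_mat[OF mat_diag_dim])
  finally show ?thesis
    unfolding elem_div_exps_mat_diag
    using dedekind_exp_mono L'(1) invertible_over_newton_coeff_mat newton_value_unit(1) by blast
qed

end

theorem theorem2p7:
  fixes p n j :: nat and z :: complex
  assumes "prime p" and "n \<ge> 1"
    and "z ^ (p ^ n) = 1" and "\<forall>k. 0 < k \<and> k < p ^ n \<longrightarrow> z ^ k \<noteq> 1"
    and "j < p ^ n" and "\<not> p dvd j"
  shows "(\<exists>e. elem_div_exps (cyc_ring p n z) (1 - z) ((p - 1) * p ^ (n - 1)) (dedekind_mat p n z) e)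
    \<and> (\<forall>e. elem_div_exps (cyc_ring p n z) (1 - z) ((p - 1) * p ^ (n - 1)) (dedekind_mat p n z) e
          \<longrightarrow> int (e (Ncount p j - 1)) =
              - 1 + (\<Sum>s\<le>n. (int (digit p j s) * int (s + 1) - int (digit p j (s + 1)) * int (s + 2)) * int p ^ s))"
proof -
  interpret cyclotomic_prime_power p n z
    using assms(1-4) by unfold_locales
  have A: "dedekind_mat p n z \<in> carrier_mat r r" unfolding dedekind_mat_def by simp
  note exps = elem_div_exps_dedekind_mat
  note index = res_Ncount[OF assms(5,6)]
  have formula: "int (dedekind_exp (Ncount p j - 1))
      = - 1 + (\<Sum>s\<le>n. (int (digit p j s) * int (s + 1) - int (digit p j (s + 1)) * int (s + 2)) * int p ^ s)"
    unfolding dedekind_exp_def index(2) by (rule newton_exp_self_eq_digit_formula[OF p_gt1 assms(2,5,6)])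
  show ?thesis
  proof (intro conjI allI impI)
    show "\<exists>e. elem_div_exps T t r (dedekind_mat p n z) e" using exps by blast
    fix e assume "elem_div_exps T t r (dedekind_mat p n z) e"
    then have "e (Ncount p j - 1) = dedekind_exp (Ncount p j - 1)"
      by (rule T.elem_div_exps_unique[OF A _ exps index(1)])
    then show "int (e (Ncount p j - 1))
        = - 1 + (\<Sum>s\<le>n. (int (digit p j s) * int (s + 1) - int (digit p j (s + 1)) * int (s + 2)) * int p ^ s)"
      using formula by simp
  qed
qed

end
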